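(* Let $m=2^i$ with $i\ge 1$. The subspaces of $\mathbb{R}^m$ defined by the generator matrices in $\mathcal{C}_i$ (constructed below) form a set of $(m-1)(m+2)=2^{2i}+2^i-2$ distinct $\tfrac{m}{2}$-dimensional subspaces of $\mathbb{R}^m$, and the distance between any two distinct subspaces of this set is either $\sqrt{m/4}$ or $\sqrt{m/2}$.
   Context: A subspace $P$ of $\mathbb{R}^m$ of dimension $n$ is specified by a generator matrix, an $n\times m$ matrix whose rows span $P$; the same symbol is used for the subspace and its generator matrix, and $P^\perp$ denotes (a generator matrix of) the orthogonal complement of $P$ in the ambient space. $I$ denotes an identity matrix of the appropriate size, $0$ a zero matrix, and $+$, $-$ denote $+1$, $-1$. Distance: for two $n$-dimensional subspaces $P,Q$ of $\mathbb{R}^m$, the principal angles $\theta_1,\dots,\theta_n\in[0,\pi/2]$ are defined by $\cos\theta_k=\max_{u\in P}\max_{v\in Q} u\cdot v = u_k\cdot v_k$ for $k=1,\dots,n$, subject to $u\cdot u=v\cdot v=1$ and $u\cdot u_j=0$, $v\cdot v_j=0$ for $1\le j\le k-1$. The distance is $d(P,Q)=\sqrt{\sin^2\theta_1+\cdots+\sin^2\theta_n}$. Sets $\mathcal{Q}_i$ of $2^{i-1}\times 2^{i-1}$ matrices: $\mathcal{Q}_1=\{(+),(-)\}$, and for $i\ge 2$, $\mathcal{Q}_i=\left\{\begin{pmatrix}+&0\\0&+\end{pmatrix}\otimes Q,\ \begin{pmatrix}+&0\\0&-\end{pmatrix}\otimes Q,\ \begin{pmatrix}0&+\\+&0\end{pmatrix}\otimes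 Q,\ \begin{pmatrix}0&+\\-&0\end{pmatrix}\otimes Q \;:\; Q\in\mathcal{Q}_{i-1}\right\}$, where $\otimes$ is the Kronecker product. Sets $\mathcal{C}_i$ of $2^{i-1}\times 2^i$ generator matrices: $\mathcal{C}_1=\{(+\ 0),(0\ +),(+\ +),(+\ -)\}$ (four lines in $\mathbb{R}^2$), and for $i\ge2$, $\mathcal{C}_i=\left\{(I\ 0),\ (0\ I),\ \begin{pmatrix}P&0\\0&P\end{pmatrix},\ \begin{pmatrix}P&0\\0&P^\perp\end{pmatrix},\ (I\ Q)\;:\; P\in\mathcal{C}_{i-1},\ Q\in\mathcal{Q}_i\right\}$, where $I$ is the $2^{i-1}\times 2^{i-1}$ identity. Thus $(I\ 0)$ spans the first $2^{i-1}$ coordinate vectors of $\mathbb{R}^{2^i}$, $(0\ I)$ the last $2^{i-1}$, $\begin{pmatrix}P&0\\0&P\end{pmatrix}$ is $P\oplus P$ and $\begin{pmatrix}P&0\\0&P^\perp\end{pmatrix}$ is $P\oplus P^\perp$ (with $P,P^\perp\subset\mathbb{R}^{2^{i-1}}$), and $(I\ Q)$ is the row space of the $2^{i-1}\times 2^i$ matrix $[I\,|\,Q]$. *)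

theory Defs
  imports Complex_Main
begin

text \<open>Vectors of R^m are represented as functions nat => real vanishing at all
  coordinates >= m; matrices as functions nat => nat => real (row, column) with
  explicitly given sizes.\<close>

definition in_Rm :: "nat \<Rightarrow> (nat \<Rightarrow> real) \<Rightarrow> bool" where
  "in_Rm m v \<longleftrightarrow> (\<forall>j\<ge>m. v j = 0)"

definition dotp :: "nat \<Rightarrow> (nat \<Rightarrow> real) \<Rightarrow> (nat \<Rightarrow> real) \<Rightarrow> real" where
  "dotp m u v = (\<Sum>j<m. u j * v j)"

definition rowspace :: "nat \<Rightarrow> nat \<Rightarrow> (nat \<Rightarrow> nat \<Rightarrow> real) \<Rightarrow> (nat \<Rightarrow> real) set" where
  "rowspace n m A = {v. \<exists>c::nat \<Rightarrow> real. v = (\<lambda>j. if j < m then (\<Sum>k<n. c k * A k j) else 0)}"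

definition lin_indep :: "nat \<Rightarrow> nat \<Rightarrow> (nat \<Rightarrow> nat \<Rightarrow> real) \<Rightarrow> bool" where
  "lin_indep m k b \<longleftrightarrow> (\<forall>c::nat \<Rightarrow> real. (\<forall>j<m. (\<Sum>t<k. c t * b t j) = 0) \<longrightarrow> (\<forall>t<k. c t = 0))"

definition span_of :: "nat \<Rightarrow> (nat \<Rightarrow> nat \<Rightarrow> real) \<Rightarrow> (nat \<Rightarrow> real) set" where
  "span_of k b = {v. \<exists>c::nat \<Rightarrow> real. v = (\<lambda>j. \<Sum>t<k. c t * b t j)}"

definition has_dim :: "nat \<Rightarrow> (nat \<Rightarrow> real) set \<Rightarrow> nat \<Rightarrow> bool" where
  "has_dim m S k \<longleftrightarrow> (\<exists>b. (\<forall>t<k. in_Rm m (b t)) \<and> lin_indep m k b \<and> S = span_of k b)"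

definition perp :: "nat \<Rightarrow> (nat \<Rightarrow> real) set \<Rightarrow> (nat \<Rightarrow> real) set" where
  "perp h P = {y. in_Rm h y \<and> (\<forall>x\<in>P. dotp h x y = 0)}"

definition concat :: "nat \<Rightarrow> (nat \<Rightarrow> real) \<Rightarrow> (nat \<Rightarrow> real) \<Rightarrow> (nat \<Rightarrow> real)" where
  "concat h x y = (\<lambda>j. if j < h then x j else if j < 2*h then y (j - h) else 0)"

definition principal_vectors ::
  "nat \<Rightarrow> nat \<Rightarrow> (nat \<Rightarrow> real) set \<Rightarrow> (nat \<Rightarrow> real) set \<Rightarrow>
     (nat \<Rightarrow> nat \<Rightarrow> real) \<Rightarrow> (nat \<Rightarrow> nat \<Rightarrow> real) \<Rightarrow> bool" where
  "principal_vectors m n P Q u v \<longleftrightarrow>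
     (\<forall>k<n. u k \<in> P \<and> v k \<in> Q \<and> dotp m (u k) (u k) = 1 \<and> dotp m (v k) (v k) = 1
        \<and> (\<forall>j<k. dotp m (u k) (u j) = 0 \<and> dotp m (v k) (v j) = 0)
        \<and> (\<forall>x\<in>P. \<forall>y\<in>Q. dotp m x x = 1 \<and> dotp m y y = 1
              \<and> (\<forall>j<k. dotp m x (u j) = 0 \<and> dotp m y (v j) = 0)
              \<longrightarrow> dotp m x y \<le> dotp m (u k) (v k)))"

text \<open>cos theta_k = u_k . v_k, so sin^2 theta_k = 1 - (u_k . v_k)^2.\<close>
definition subspace_dist :: "nat \<Rightarrow> nat \<Rightarrow> (nat \<Rightarrow> real) set \<Rightarrow> (nat \<Rightarrow> real) set \<Rightarrow> real" where
  "subspace_dist m n P Q =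
     (SOME d. \<exists>u v. principal_vectors m n P Q u v
                 \<and> d = sqrt (\<Sum>k<n. 1 - (dotp m (u k) (v k))^2))"

definition kron2 :: "nat \<Rightarrow> (nat \<Rightarrow> nat \<Rightarrow> real) \<Rightarrow> (nat \<Rightarrow> nat \<Rightarrow> real) \<Rightarrow> (nat \<Rightarrow> nat \<Rightarrow> real)" where
  "kron2 h B Q = (\<lambda>r c. if r < 2*h \<and> c < 2*h then B (r div h) (c div h) * Q (r mod h) (c mod h) else 0)"

definition B_id :: "nat \<Rightarrow> nat \<Rightarrow> real" where
  "B_id a b = (if a = 0 \<and> b = 0 then 1 else if a = 1 \<and> b = 1 then 1 else 0)"
definition B_diag :: "nat \<Rightarrow> nat \<Rightarrow> real" where
  "B_diag a b = (if a = 0 \<and> b = 0 then 1 else if a = 1 \<and> b = 1 then -1 else 0)"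
definition B_swap :: "nat \<Rightarrow> nat \<Rightarrow> real" where
  "B_swap a b = (if a = 0 \<and> b = 1 then 1 else if a = 1 \<and> b = 0 then 1 else 0)"
definition B_rot :: "nat \<Rightarrow> nat \<Rightarrow> real" where
  "B_rot a b = (if a = 0 \<and> b = 1 then 1 else if a = 1 \<and> b = 0 then -1 else 0)"

fun Qs :: "nat \<Rightarrow> (nat \<Rightarrow> nat \<Rightarrow> real) set" where
  "Qs 0 = {}"
| "Qs (Suc 0) = {(\<lambda>r c. if r = 0 \<and> c = 0 then 1 else 0), (\<lambda>r c. if r = 0 \<and> c = 0 then -1 else 0)}"
| "Qs (Suc (Suc k)) =
     (\<Union>Q\<in>Qs (Suc k). {kron2 (2^k) B_id Q, kron2 (2^k) B_diag Q,
                          kron2 (2^k) B_swap Q, kron2 (2^k) B_rot Q})"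

definition IQ :: "nat \<Rightarrow> (nat \<Rightarrow> nat \<Rightarrow> real) \<Rightarrow> (nat \<Rightarrow> nat \<Rightarrow> real)" where
  "IQ h Q = (\<lambda>r c. if r < h \<and> c < h then (if r = c then 1 else 0)
                   else if r < h \<and> h \<le> c \<and> c < 2*h then Q r (c - h) else 0)"

definition row2 :: "real \<Rightarrow> real \<Rightarrow> (nat \<Rightarrow> nat \<Rightarrow> real)" where
  "row2 a b = (\<lambda>r c. if r = 0 \<and> c = 0 then a else if r = 0 \<and> c = 1 then b else 0)"

text \<open>Block generator matrices are rendered by the subspaces they span:
  (I 0), (0 I), P (+) P, P (+) P^perp, rowspace [I|Q].\<close>
fun Cs :: "nat \<Rightarrow> (nat \<Rightarrow> real) set set" where
  "Cs 0 = {}"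
| "Cs (Suc 0) = {rowspace 1 2 (row2 1 0), rowspace 1 2 (row2 0 1),
                 rowspace 1 2 (row2 1 1), rowspace 1 2 (row2 1 (-1))}"
| "Cs (Suc (Suc k)) =
     {{concat (2^(Suc k)) x (\<lambda>_. 0) | x. in_Rm (2^(Suc k)) x},
      {concat (2^(Suc k)) (\<lambda>_. 0) x | x. in_Rm (2^(Suc k)) x}}
     \<union> (\<Union>P\<in>Cs (Suc k). {{concat (2^(Suc k)) x y | x y. x \<in> P \<and> y \<in> P},
                          {concat (2^(Suc k)) x y | x y. x \<in> P \<and> y \<in> perp (2^(Suc k)) P}})
     \<union> (\<lambda>Q. rowspace (2^(Suc k)) (2^(Suc (Suc k))) (IQ (2^(Suc k)) Q)) ` Qs (Suc (Suc k))"

end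

theory Submission
  imports Defs "Jordan_Normal_Form.Determinant" "HOL-Analysis.Function_Topology"
begin

(* For n-dimensional subspaces S, T of R^m, principal vectors form orthonormal bases of S and T
   in which the cross Gram matrix is diagonal, so the sum of the cos^2 of the principal angles is
   the basis-free overlap tr(P_S P_T) = sum_{s,t} (a_s . c_t)^2, computed in any orthonormal bases
   (a_s) of S and (c_t) of T.  Hence d(S,T)^2 = n - overlap(S,T), and it suffices to show by
   induction on i that distinct members of C_i have overlap 0 or n/2, where n = 2^(i-1).
   The overlap is additive on block subspaces A (+) B, satisfies
   overlap(P^perp, T) = dim T - overlap(P, T), equals half the dimension between a graph (I Q)
   and any block subspace, and equals (n + <Q,Q'>)/2 between two graphs; the Frobenius products
   <Q,Q'> of distinct members of Q_i are 0 or -n.  Since overlap(S,S) = n, distinct generators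
   give distinct subspaces, so |C_(i+1)| = 2 + 2 |C_i| + |Q_(i+1)|. *)

section \<open>Linear combinations and orthonormal families\<close>

definition lincomb :: "nat \<Rightarrow> (nat \<Rightarrow> real) \<Rightarrow> (nat \<Rightarrow> nat \<Rightarrow> real) \<Rightarrow> nat \<Rightarrow> real" where
  "lincomb n c a = (\<lambda>j. \<Sum>t<n. c t * a t j)"

definition orthonormal :: "nat \<Rightarrow> nat \<Rightarrow> (nat \<Rightarrow> nat \<Rightarrow> real) \<Rightarrow> bool" where
  "orthonormal m n a \<longleftrightarrow> (\<forall>t<n. in_Rm m (a t)) \<and>
     (\<forall>s<n. \<forall>t<n. dotp m (a s) (a t) = (if s = t then 1 else 0))"

definition has_onb :: "nat \<Rightarrow> (nat \<Rightarrow> real) set \<Rightarrow> nat \<Rightarrow> bool" where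
  "has_onb m S n \<longleftrightarrow> (\<exists>a. orthonormal m n a \<and> S = span_of n a)"

lemma sum_lessThan_add:
  fixes k :: nat
  shows "(\<Sum>t<n + k. f t) = (\<Sum>t<n. f t) + (\<Sum>t<k. f (n + t))"
  by (induction k) (auto simp: add.assoc)

lemma span_of_eq_range_lincomb: "span_of n a = range (\<lambda>c. lincomb n c a)"
  unfolding span_of_def lincomb_def by auto

lemma lincomb_cong: "(\<And>t. t < n \<Longrightarrow> c t = d t) \<Longrightarrow> lincomb n c a = lincomb n d a"
  unfolding lincomb_def by simp

lemma lincomb_zero [simp]: "lincomb n (\<lambda>_. 0) a = (\<lambda>_. 0)"
  unfolding lincomb_def by simp

lemma lincomb_in_span_of [simp]: "lincomb n c a \<in> span_of n a"
  unfolding span_of_eq_range_lincomb by auto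

lemma dotp_commute: "dotp m x y = dotp m y x"
  unfolding dotp_def by (simp add: mult.commute)

lemma dotp_lincomb_left: "dotp m (lincomb n c a) y = (\<Sum>t<n. c t * dotp m (a t) y)"
  unfolding dotp_def lincomb_def
  by (simp add: sum_distrib_left sum_distrib_right sum.swap[of _ "{..<n}"] mult.assoc mult.left_commute)

lemma dotp_lincomb_right: "dotp m y (lincomb n c a) = (\<Sum>t<n. c t * dotp m y (a t))"
  using dotp_lincomb_left[of m n c a y] by (simp add: dotp_commute)

lemma dotp_add_left: "dotp m (\<lambda>j. x j + y j) z = dotp m x z + dotp m y z"
  unfolding dotp_def by (simp add: sum.distrib algebra_simps)

lemma dotp_diff_left: "dotp m (\<lambda>j. x j - y j) z = dotp m x z - dotp m y z"
  unfolding dotp_def by (simp add: sum_subtractf algebra_simps)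

lemma dotp_scale_left: "dotp m (\<lambda>j. r * x j) z = r * dotp m x z"
  unfolding dotp_def by (simp add: sum_distrib_left algebra_simps)

lemma dotp_add_right: "dotp m z (\<lambda>j. x j + y j) = dotp m z x + dotp m z y"
  unfolding dotp_def by (simp add: sum.distrib algebra_simps)

lemma dotp_scale_right: "dotp m z (\<lambda>j. r * x j) = r * dotp m z x"
  unfolding dotp_def by (simp add: sum_distrib_left algebra_simps)

lemma dotp_zero_left [simp]: "dotp m (\<lambda>_. 0) y = 0"
  unfolding dotp_def by simp

lemma dotp_zero_right [simp]: "dotp m y (\<lambda>_. 0) = 0"
  unfolding dotp_def by simp

lemma dotp_self_nonneg: "0 \<le> dotp m x x"
  unfolding dotp_def by (simp add: sum_nonneg)

lemma dotp_self_eq_0: "dotp m x x = 0 \<Longrightarrow> j < m \<Longrightarrow> x j = 0"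
  unfolding dotp_def using sum_nonneg_eq_0_iff[of "{..<m}" "\<lambda>j. x j * x j"] by auto

lemma in_Rm_eqI: "in_Rm m x \<Longrightarrow> in_Rm m y \<Longrightarrow> (\<And>j. j < m \<Longrightarrow> x j = y j) \<Longrightarrow> x = y"
  unfolding in_Rm_def by (metis not_le ext)

lemma span_of_add:
  assumes "x \<in> span_of n a" "y \<in> span_of n a"
  shows "(\<lambda>j. x j + y j) \<in> span_of n a"
proof -
  obtain c d where "x = lincomb n c a" "y = lincomb n d a"
    using assms unfolding span_of_eq_range_lincomb by auto
  then have "(\<lambda>j. x j + y j) = lincomb n (\<lambda>t. c t + d t) a"
    by (simp add: lincomb_def sum.distrib distrib_right)
  then show ?thesis by simp
qed

lemma span_of_diff:
  assumes "x \<in> span_of n a" "y \<in> span_of n a"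
  shows "(\<lambda>j. x j - y j) \<in> span_of n a"
proof -
  obtain c d where "x = lincomb n c a" "y = lincomb n d a"
    using assms unfolding span_of_eq_range_lincomb by auto
  then have "(\<lambda>j. x j - y j) = lincomb n (\<lambda>t. c t - d t) a"
    by (simp add: lincomb_def sum_subtractf left_diff_distrib)
  then show ?thesis by simp
qed

lemma span_of_scale:
  assumes "x \<in> span_of n a"
  shows "(\<lambda>j. r * x j) \<in> span_of n a"
proof -
  obtain c where "x = lincomb n c a" using assms unfolding span_of_eq_range_lincomb by auto
  then have "(\<lambda>j. r * x j) = lincomb n (\<lambda>t. r * c t) a"
    by (simp add: lincomb_def sum_distrib_left mult.assoc)
  then show ?thesis by simp
qed

lemma span_of_basis:
  assumes "t < n"
  shows "a t \<in> span_of n a"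
proof -
  have "(\<Sum>s<n. (if s = t then 1 else 0) * a s j) = a t j" for j
    using assms by (simp add: if_distrib[of "\<lambda>c. c * _"] cong: if_cong)
  then have "lincomb n (\<lambda>s. if s = t then 1 else 0) a = a t"
    by (simp add: lincomb_def)
  then show ?thesis by (metis lincomb_in_span_of)
qed

lemma lincomb_in_span_ofI:
  assumes "\<And>t. t < k \<Longrightarrow> b t \<in> span_of n a"
  shows "lincomb k c b \<in> span_of n a"
  using assms
proof (induction k)
  case 0
  have "lincomb 0 c b = (\<lambda>_. 0)" unfolding lincomb_def by simp
  then show ?case using lincomb_in_span_of[of n "\<lambda>_. 0" a] by simp
next
  case (Suc k)
  have "lincomb (Suc k) c b = (\<lambda>j. lincomb k c b j + c k * b k j)" unfolding lincomb_def by simp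
  then show ?case using Suc by (simp add: span_of_add span_of_scale)
qed

lemma span_of_mono: "(\<And>t. t < k \<Longrightarrow> b t \<in> span_of n a) \<Longrightarrow> span_of k b \<subseteq> span_of n a"
  using lincomb_in_span_ofI unfolding span_of_eq_range_lincomb[of k] by blast

lemma span_of_in_Rm: "orthonormal m n a \<Longrightarrow> x \<in> span_of n a \<Longrightarrow> in_Rm m x"
  unfolding span_of_def orthonormal_def in_Rm_def by auto

lemma dotp_lincomb_lincomb:
  "dotp m (lincomb n c a) (lincomb k d b) = (\<Sum>s<n. \<Sum>t<k. c s * d t * dotp m (a s) (b t))"
  unfolding dotp_lincomb_left by (simp add: dotp_lincomb_right sum_distrib_left mult.assoc)

lemma orthonormal_dotp_lincomb:
  assumes "orthonormal m n a" "s < n"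
  shows "dotp m (lincomb n c a) (a s) = c s"
proof -
  have "dotp m (lincomb n c a) (a s) = (\<Sum>t<n. if t = s then c t else 0)"
    unfolding dotp_lincomb_left using assms unfolding orthonormal_def by (intro sum.cong) auto
  then show ?thesis using assms(2) by simp
qed

lemma orthonormal_dotp_lincomb_lincomb:
  assumes "orthonormal m n a"
  shows "dotp m (lincomb n c a) (lincomb n d a) = (\<Sum>t<n. c t * d t)"
  unfolding dotp_lincomb_right
  by (intro sum.cong) (simp_all add: orthonormal_dotp_lincomb[OF assms])

lemma orthonormal_expansion:
  assumes a: "orthonormal m n a" and x: "x \<in> span_of n a"
  shows "x = lincomb n (\<lambda>s. dotp m x (a s)) a"
proof -
  obtain c where c: "x = lincomb n c a" using x unfolding span_of_eq_range_lincomb by auto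
  have "lincomb n (\<lambda>s. dotp m x (a s)) a = lincomb n c a"
    using orthonormal_dotp_lincomb[OF a] c by (intro lincomb_cong) simp
  then show ?thesis using c by simp
qed

definition orthogonal_matrix :: "nat \<Rightarrow> (nat \<Rightarrow> nat \<Rightarrow> real) \<Rightarrow> bool" where
  "orthogonal_matrix n Q \<longleftrightarrow> (\<forall>r<n. \<forall>s<n. (\<Sum>c<n. Q r c * Q s c) = (if r = s then 1 else 0))"

lemma orthogonal_matrix_columns:
  assumes Q: "orthogonal_matrix n Q" and rs: "r < n" "s < n"
  shows "(\<Sum>j<n. Q j r * Q j s) = (if r = s then 1 else 0)"
proof -
  define A where "A = mat n n (\<lambda>(i, j). Q i j)"
  have A: "A \<in> carrier_mat n n" unfolding A_def by simp
  have "A * transpose_mat A = 1\<^sub>m n"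
    using Q by (intro eq_matI) (auto simp: A_def orthogonal_matrix_def scalar_prod_def atLeast0LessThan)
  then have "transpose_mat A * A = 1\<^sub>m n"
    using mat_mult_left_right_inverse[OF A] A by auto
  then have "(transpose_mat A * A) $$ (r, s) = (if r = s then 1 else 0)" using rs by simp
  then show ?thesis using rs by (simp add: A_def scalar_prod_def atLeast0LessThan)
qed

lemma orthonormal_in_span_le:
  assumes a: "orthonormal m n a" and u: "orthonormal m k u"
    and au: "\<And>s. s < n \<Longrightarrow> a s \<in> span_of k u"
  shows "n \<le> k"
proof (rule ccontr)
  assume "\<not> n \<le> k"
  \<comment> \<open>The coordinates of the a s in the u j, padded by zero columns, would form an orthogonal
    n \<times> n matrix with a zero column.\<close>
  define D where "D s j = (if j < k then dotp m (a s) (u j) else 0)" for s j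
  have "orthogonal_matrix n D"
    unfolding orthogonal_matrix_def
  proof (intro allI impI)
    fix s t assume st: "s < n" "t < n"
    have "(\<Sum>j<n. D s j * D t j) = (\<Sum>j<k. D s j * D t j)"
      using \<open>\<not> n \<le> k\<close> by (intro sum.mono_neutral_right) (auto simp: D_def)
    also have "\<dots> = (\<Sum>j<k. dotp m (a s) (u j) * dotp m (a t) (u j))"
      by (simp add: D_def)
    also have "\<dots> = dotp m (lincomb k (\<lambda>j. dotp m (a s) (u j)) u) (lincomb k (\<lambda>j. dotp m (a t) (u j)) u)"
      by (rule orthonormal_dotp_lincomb_lincomb[OF u, symmetric])
    also have "\<dots> = dotp m (a s) (a t)"
      by (simp only: orthonormal_expansion[OF u au[OF st(1)], symmetric]
          orthonormal_expansion[OF u au[OF st(2)], symmetric])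
    also have "\<dots> = (if s = t then 1 else 0)" using a st by (simp add: orthonormal_def)
    finally show "(\<Sum>j<n. D s j * D t j) = (if s = t then 1 else 0)" .
  qed
  then have "(\<Sum>s<n. D s (n - 1) * D s (n - 1)) = 1"
    using orthogonal_matrix_columns \<open>\<not> n \<le> k\<close> by simp
  moreover have "\<not> n - 1 < k" using \<open>\<not> n \<le> k\<close> by simp
  ultimately show False by (simp add: D_def)
qed

lemma orthonormal_span_eq:
  assumes a: "orthonormal m n a" and w: "orthonormal m n w"
    and wa: "\<And>j. j < n \<Longrightarrow> w j \<in> span_of n a"
  shows "span_of n w = span_of n a"
proof
  show "span_of n w \<subseteq> span_of n a" using span_of_mono wa by blast
  define C where "C j s = dotp m (w j) (a s)" for j s
  have w_eq: "w j = lincomb n (C j) a" if "j < n" for j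
    unfolding C_def using orthonormal_expansion[OF a wa[OF that]] .
  have "orthogonal_matrix n C"
    unfolding orthogonal_matrix_def
  proof (intro allI impI)
    fix j k assume "j < n" "k < n"
    then have "dotp m (w j) (w k) = (\<Sum>s<n. C j s * C k s)"
      by (simp only: w_eq orthonormal_dotp_lincomb_lincomb[OF a])
    then show "(\<Sum>s<n. C j s * C k s) = (if j = k then 1 else 0)"
      using w \<open>j < n\<close> \<open>k < n\<close> unfolding orthonormal_def by auto
  qed
  have cols: "(\<Sum>j<n. C j s * C j r) = (if s = r then 1 else 0)" if "s < n" "r < n" for s r
    using orthogonal_matrix_columns[OF \<open>orthogonal_matrix n C\<close> that] .
  have a_eq: "a s = lincomb n (\<lambda>j. C j s) w" if s: "s < n" for s
  proof
    fix i
    have "lincomb n (\<lambda>j. C j s) w i = (\<Sum>j<n. \<Sum>r<n. C j s * C j r * a r i)"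
      unfolding lincomb_def using w_eq by (simp add: lincomb_def sum_distrib_left mult.assoc)
    also have "\<dots> = (\<Sum>r<n. \<Sum>j<n. C j s * C j r * a r i)"
      by (rule sum.swap)
    also have "\<dots> = (\<Sum>r<n. (\<Sum>j<n. C j s * C j r) * a r i)"
      by (simp add: sum_distrib_right)
    also have "\<dots> = (\<Sum>r<n. if r = s then a r i else 0)"
      using cols[OF s] by (intro sum.cong) auto
    finally show "a s i = lincomb n (\<lambda>j. C j s) w i" using s by simp
  qed
  then have "a s \<in> span_of n w" if "s < n" for s
    using that by simp
  then show "span_of n a \<subseteq> span_of n w" by (rule span_of_mono)
qed

lemma exists_unit_orthogonal:
  assumes a: "orthonormal m n a" and u: "orthonormal m k u" and "k < n"
    and ua: "\<And>j. j < k \<Longrightarrow> u j \<in> span_of n a"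
  shows "\<exists>x\<in>span_of n a. dotp m x x = 1 \<and> (\<forall>j<k. dotp m x (u j) = 0)"
proof (rule ccontr)
  assume none: "\<not> ?thesis"
  define r where "r s = (\<lambda>i. a s i - lincomb k (\<lambda>j. dotp m (a s) (u j)) u i)" for s
  have r_span: "r s \<in> span_of n a" if "s < n" for s
    unfolding r_def by (intro span_of_diff span_of_basis that lincomb_in_span_ofI ua)
  have r_orth: "dotp m (r s) (u j) = 0" if "j < k" for s j
    unfolding r_def dotp_diff_left using orthonormal_dotp_lincomb[OF u that] by simp
  have r_zero: "dotp m (r s) (r s) = 0" if s: "s < n" for s
  proof (rule ccontr)
    assume "dotp m (r s) (r s) \<noteq> 0"
    then have pos: "0 < dotp m (r s) (r s)" using dotp_self_nonneg[of m "r s"] by linarith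
    define x where "x = (\<lambda>i. (1 / sqrt (dotp m (r s) (r s))) * r s i)"
    have "x \<in> span_of n a" unfolding x_def using span_of_scale[OF r_span[OF s]] .
    moreover have "dotp m x x = 1"
      unfolding x_def dotp_scale_left dotp_scale_right using pos by (simp add: real_sqrt_mult[symmetric])
    moreover have "\<forall>j<k. dotp m x (u j) = 0" unfolding x_def dotp_scale_left using r_orth by simp
    ultimately show False using none by blast
  qed
  have "a s \<in> span_of k u" if s: "s < n" for s
  proof -
    have "a s = lincomb k (\<lambda>j. dotp m (a s) (u j)) u"
    proof (rule in_Rm_eqI)
      show "in_Rm m (a s)" using a s unfolding orthonormal_def by auto
      show "in_Rm m (lincomb k (\<lambda>j. dotp m (a s) (u j)) u)"
        using span_of_in_Rm[OF u] by simp
      show "a s i = lincomb k (\<lambda>j. dotp m (a s) (u j)) u i" if "i < m" for i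
        using dotp_self_eq_0[OF r_zero[OF s] that] unfolding r_def by simp
    qed
    then show ?thesis by (rule ssubst) (rule lincomb_in_span_of)
  qed
  then show False using orthonormal_in_span_le[OF a u] \<open>k < n\<close> by auto
qed

lemma has_onb_imp_has_dim:
  assumes "has_onb m S n"
  shows "has_dim m S n"
proof -
  obtain a where a: "orthonormal m n a" and S: "S = span_of n a"
    using assms unfolding has_onb_def by blast
  have "lin_indep m n a"
    unfolding lin_indep_def
  proof (intro allI impI)
    fix c t assume "\<forall>j<m. (\<Sum>t<n. c t * a t j) = 0" and t: "t < n"
    then have "dotp m (lincomb n c a) (a t) = 0" by (simp add: dotp_def lincomb_def)
    then show "c t = 0" using orthonormal_dotp_lincomb[OF a t] by simp
  qed
  then show ?thesis using a S unfolding has_dim_def orthonormal_def by blast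
qed

definition std_vec :: "nat \<Rightarrow> nat \<Rightarrow> real" where
  "std_vec t = (\<lambda>j. if j = t then 1 else 0)"

lemma dotp_std_vec: "t < m \<Longrightarrow> dotp m (std_vec t) y = y t"
  unfolding dotp_def std_vec_def by (simp add: if_distrib[of "\<lambda>c. c * _"] cong: if_cong)

lemma orthonormal_std_vec: "orthonormal m m std_vec"
  unfolding orthonormal_def using dotp_std_vec by (auto simp: in_Rm_def std_vec_def)

lemma span_of_std_vec: "span_of m std_vec = {x. in_Rm m x}"
proof
  show "span_of m std_vec \<subseteq> {x. in_Rm m x}" using span_of_in_Rm[OF orthonormal_std_vec] by auto
  show "{x. in_Rm m x} \<subseteq> span_of m std_vec"
  proof
    fix x assume "x \<in> {x. in_Rm m x}"
    then have "x = lincomb m x std_vec"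
      by (auto simp: lincomb_def std_vec_def in_Rm_def if_distrib[of "\<lambda>c. _ * c"] cong: if_cong)
    then show "x \<in> span_of m std_vec" by (metis lincomb_in_span_of)
  qed
qed

section \<open>Orthogonal projection and overlap\<close>

definition proj :: "nat \<Rightarrow> (nat \<Rightarrow> real) set \<Rightarrow> (nat \<Rightarrow> real) \<Rightarrow> nat \<Rightarrow> real" where
  "proj m S x = (THE y. y \<in> S \<and> (\<forall>z\<in>S. dotp m (\<lambda>j. x j - y j) z = 0))"

lemma proj_span_of:
  assumes a: "orthonormal m n a"
  shows "proj m (span_of n a) x = lincomb n (\<lambda>s. dotp m (a s) x) a"
  unfolding proj_def
proof (rule the_equality)
  let ?p = "lincomb n (\<lambda>s. dotp m (a s) x) a"
  have res: "dotp m (\<lambda>j. x j - ?p j) (a t) = 0" if "t < n" for t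
    using orthonormal_dotp_lincomb[OF a that] by (simp add: dotp_diff_left dotp_commute)
  then show "?p \<in> span_of n a \<and> (\<forall>z\<in>span_of n a. dotp m (\<lambda>j. x j - ?p j) z = 0)"
    by (auto simp: span_of_eq_range_lincomb dotp_lincomb_right)
  fix y assume y: "y \<in> span_of n a \<and> (\<forall>z\<in>span_of n a. dotp m (\<lambda>j. x j - y j) z = 0)"
  have coeff: "dotp m (\<lambda>j. y j - ?p j) (a t) = 0" if "t < n" for t
  proof -
    have "dotp m (\<lambda>j. y j - ?p j) (a t) = dotp m (\<lambda>j. x j - ?p j) (a t) - dotp m (\<lambda>j. x j - y j) (a t)"
      by (simp add: dotp_def sum_subtractf algebra_simps)
    moreover have "dotp m (\<lambda>j. x j - y j) (a t) = 0"
      using y span_of_basis[OF that, of a] by blast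
    ultimately show ?thesis using res[OF that] by simp
  qed
  have "(\<lambda>j. y j - ?p j) = lincomb n (\<lambda>s. dotp m (\<lambda>j. y j - ?p j) (a s)) a"
    using y by (intro orthonormal_expansion[OF a] span_of_diff) simp_all
  also have "\<dots> = lincomb n (\<lambda>_. 0) a"
    by (rule lincomb_cong) (simp add: coeff)
  finally show "y = ?p" by (simp add: fun_eq_iff)
qed

(* The trace of P_S P_T. *)
definition overlap :: "nat \<Rightarrow> (nat \<Rightarrow> real) set \<Rightarrow> (nat \<Rightarrow> real) set \<Rightarrow> real" where
  "overlap m S T = (\<Sum>j<m. dotp m (proj m S (std_vec j)) (proj m T (std_vec j)))"

lemma overlap_commute: "overlap m S T = overlap m T S"
  unfolding overlap_def by (simp add: dotp_commute)

lemma overlap_span_of: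
  assumes a: "orthonormal m n a" and b: "orthonormal m k b"
  shows "overlap m (span_of n a) (span_of k b) = (\<Sum>s<n. \<Sum>t<k. (dotp m (a s) (b t))\<^sup>2)"
proof -
  have coord: "dotp m (c t) (std_vec j) = c t j" if "j < m" for c :: "nat \<Rightarrow> nat \<Rightarrow> real" and t j
    by (subst dotp_commute) (rule dotp_std_vec[OF that])
  have "overlap m (span_of n a) (span_of k b)
      = (\<Sum>j<m. \<Sum>s<n. \<Sum>t<k. a s j * b t j * dotp m (a s) (b t))"
    unfolding overlap_def proj_span_of[OF a] proj_span_of[OF b] dotp_lincomb_lincomb
    by (simp add: coord)
  also have "\<dots> = (\<Sum>s<n. \<Sum>t<k. \<Sum>j<m. a s j * b t j * dotp m (a s) (b t))"
    by (subst sum.swap, rule sum.cong, rule refl, rule sum.swap)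
  also have "\<dots> = (\<Sum>s<n. \<Sum>t<k. (dotp m (a s) (b t))\<^sup>2)"
    by (simp add: dotp_def power2_eq_square sum_distrib_right)
  finally show ?thesis .
qed

lemma overlap_self:
  assumes "has_onb m S n"
  shows "overlap m S S = n"
proof -
  obtain a where a: "orthonormal m n a" and S: "S = span_of n a"
    using assms unfolding has_onb_def by blast
  have "(\<Sum>s<n. \<Sum>t<n. (dotp m (a s) (a t))\<^sup>2) = (\<Sum>s<n. \<Sum>t<n. if t = s then 1 else 0)"
    using a unfolding orthonormal_def by (intro sum.cong) auto
  then show ?thesis unfolding S overlap_span_of[OF a a] by simp
qed

lemma overlap_Rm_left:
  assumes "has_onb m T k"
  shows "overlap m {x. in_Rm m x} T = k"
proof -
  obtain b where b: "orthonormal m k b" and T: "T = span_of k b"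
    using assms unfolding has_onb_def by blast
  have "overlap m {x. in_Rm m x} T = (\<Sum>s<m. \<Sum>t<k. (b t s)\<^sup>2)"
    unfolding T span_of_std_vec[symmetric] overlap_span_of[OF orthonormal_std_vec b]
    by (simp add: dotp_std_vec)
  also have "\<dots> = (\<Sum>t<k. dotp m (b t) (b t))"
    by (subst sum.swap) (simp add: dotp_def power2_eq_square)
  also have "\<dots> = k" using b unfolding orthonormal_def by simp
  finally show ?thesis .
qed

lemma overlap_zero_left [simp]: "overlap m {\<lambda>_. 0} T = 0"
proof -
  have "proj m {\<lambda>_. 0} x = (\<lambda>_. 0)" for x
    unfolding proj_def by (rule the_equality) auto
  then show ?thesis unfolding overlap_def by simp
qed

lemma overlap_zero_right [simp]: "overlap m S {\<lambda>_. 0} = 0"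
  using overlap_zero_left overlap_commute by metis

definition join_frames :: "nat \<Rightarrow> (nat \<Rightarrow> nat \<Rightarrow> real) \<Rightarrow> (nat \<Rightarrow> nat \<Rightarrow> real) \<Rightarrow> nat \<Rightarrow> nat \<Rightarrow> real" where
  "join_frames n a b = (\<lambda>t. if t < n then a t else b (t - n))"

definition orthogonal_frames ::
    "nat \<Rightarrow> nat \<Rightarrow> nat \<Rightarrow> (nat \<Rightarrow> nat \<Rightarrow> real) \<Rightarrow> (nat \<Rightarrow> nat \<Rightarrow> real) \<Rightarrow> bool" where
  "orthogonal_frames m n k a b \<longleftrightarrow> orthonormal m n a \<and> orthonormal m k b \<and>
     (\<forall>s<n. \<forall>t<k. dotp m (a s) (b t) = 0)"

lemma orthogonal_frames_swap: "orthogonal_frames m n k a b \<Longrightarrow> orthogonal_frames m k n b a"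
  unfolding orthogonal_frames_def by (simp add: dotp_commute)

lemma orthonormal_join_frames:
  "orthogonal_frames m n k a b \<Longrightarrow> orthonormal m (n + k) (join_frames n a b)"
  unfolding orthogonal_frames_def orthonormal_def join_frames_def by (auto simp: dotp_commute)

lemma lincomb_join_frames:
  "lincomb (n + k) c (join_frames n a b) = (\<lambda>j. lincomb n c a j + lincomb k (\<lambda>t. c (n + t)) b j)"
  unfolding lincomb_def sum_lessThan_add join_frames_def by simp

lemma span_join_frames:
  assumes ab: "orthogonal_frames m n k a b" and m: "n + k = m"
  shows "span_of m (join_frames n a b) = {x. in_Rm m x}"
proof -
  have J: "orthonormal m m (join_frames n a b)" using orthonormal_join_frames[OF ab] m by simp
  have "join_frames n a b t \<in> span_of m std_vec" if "t < m" for t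
    using J that unfolding span_of_std_vec orthonormal_def by simp
  then show ?thesis using orthonormal_span_eq[OF orthonormal_std_vec J] span_of_std_vec by simp
qed

lemma perp_span_of:
  assumes ab: "orthogonal_frames m n k a b" and m: "n + k = m"
  shows "perp m (span_of n a) = span_of k b"
proof
  have a: "orthonormal m n a" and b: "orthonormal m k b"
    and ab0: "\<And>s t. s < n \<Longrightarrow> t < k \<Longrightarrow> dotp m (a s) (b t) = 0"
    using ab unfolding orthogonal_frames_def by auto
  show "span_of k b \<subseteq> perp m (span_of n a)"
  proof
    fix y assume y: "y \<in> span_of k b"
    have "dotp m x y = 0" if x: "x \<in> span_of n a" for x
    proof -
      obtain c where "x = lincomb n c a" using x unfolding span_of_eq_range_lincomb by auto
      moreover obtain d where "y = lincomb k d b" using y unfolding span_of_eq_range_lincomb by auto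
      ultimately show ?thesis by (simp add: dotp_lincomb_left dotp_lincomb_right ab0)
    qed
    then show "y \<in> perp m (span_of n a)" unfolding perp_def using span_of_in_Rm[OF b y] by auto
  qed
  show "perp m (span_of n a) \<subseteq> span_of k b"
  proof
    fix y assume "y \<in> perp m (span_of n a)"
    then have yR: "in_Rm m y" and yx: "\<And>x. x \<in> span_of n a \<Longrightarrow> dotp m x y = 0"
      unfolding perp_def by auto
    have ya: "dotp m y (a s) = 0" if "s < n" for s
      using yx[OF span_of_basis[OF that]] dotp_commute[of m y "a s"] by simp
    have J: "orthonormal m (n + k) (join_frames n a b)" using orthonormal_join_frames[OF ab] .
    have "y \<in> span_of (n + k) (join_frames n a b)" using span_join_frames[OF ab m] yR m by simp
    then have "y = lincomb (n + k) (\<lambda>s. dotp m y (join_frames n a b s)) (join_frames n a b)"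
      by (rule orthonormal_expansion[OF J])
    also have "\<dots> = lincomb k (\<lambda>t. dotp m y (b t)) b"
      unfolding lincomb_join_frames by (simp add: lincomb_def join_frames_def ya)
    finally show "y \<in> span_of k b" by (rule ssubst) (rule lincomb_in_span_of)
  qed
qed

definition complemented :: "nat \<Rightarrow> nat \<Rightarrow> (nat \<Rightarrow> real) set \<Rightarrow> bool" where
  "complemented m n S \<longleftrightarrow> n \<le> m \<and> (\<exists>a b. orthogonal_frames m n (m - n) a b \<and> S = span_of n a)"

lemma complemented_has_onb: "complemented m n S \<Longrightarrow> has_onb m S n"
  unfolding complemented_def orthogonal_frames_def has_onb_def by blast

lemma complemented_perp:
  assumes "complemented m n S"
  shows "complemented m (m - n) (perp m S)"
proof -
  obtain a b where n: "n \<le> m" and ab: "orthogonal_frames m n (m - n) a b" and S: "S = span_of n a"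
    using assms unfolding complemented_def by blast
  have "perp m S = span_of (m - n) b" using perp_span_of[OF ab] n S by simp
  moreover have "orthogonal_frames m (m - n) (m - (m - n)) b a"
    using orthogonal_frames_swap[OF ab] n by simp
  ultimately show ?thesis unfolding complemented_def by auto
qed

lemma complemented_Rm: "complemented m m {x. in_Rm m x}"
proof -
  have "orthogonal_frames m m (m - m) std_vec std_vec"
    using orthonormal_std_vec by (simp add: orthogonal_frames_def orthonormal_def)
  then show ?thesis unfolding complemented_def using span_of_std_vec by auto
qed

lemma complemented_zero: "complemented m 0 {\<lambda>_. 0}"
proof -
  have "orthogonal_frames m 0 (m - 0) std_vec std_vec"
    using orthonormal_std_vec by (simp add: orthogonal_frames_def orthonormal_def)
  moreover have "span_of 0 std_vec = {\<lambda>_. 0}" unfolding span_of_def by auto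
  ultimately show ?thesis unfolding complemented_def by auto
qed

lemma overlap_perp_left:
  assumes S: "complemented m n S" and T: "has_onb m T k"
  shows "overlap m (perp m S) T = k - overlap m S T"
proof -
  obtain a b where n: "n \<le> m" and ab: "orthogonal_frames m n (m - n) a b" and S: "S = span_of n a"
    using S unfolding complemented_def by blast
  obtain c where c: "orthonormal m k c" and T: "T = span_of k c"
    using T unfolding has_onb_def by blast
  have a: "orthonormal m n a" and b: "orthonormal m (m - n) b"
    using ab unfolding orthogonal_frames_def by auto
  have perp: "perp m (span_of n a) = span_of (m - n) b" using perp_span_of[OF ab] n by simp
  have "real k = overlap m (span_of (n + (m - n)) (join_frames n a b)) T"
    using overlap_Rm_left[OF \<open>has_onb m T k\<close>] span_join_frames[OF ab] n by simp
  also have "\<dots> = overlap m S T + overlap m (perp m S) T"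
    unfolding overlap_span_of[OF orthonormal_join_frames[OF ab] c] S perp T
      overlap_span_of[OF a c] overlap_span_of[OF b c]
    by (simp add: sum_lessThan_add join_frames_def)
  finally show ?thesis by simp
qed

definition direct_sum :: "nat \<Rightarrow> (nat \<Rightarrow> real) set \<Rightarrow> (nat \<Rightarrow> real) set \<Rightarrow> (nat \<Rightarrow> real) set" where
  "direct_sum h S T = {concat h x y | x y. x \<in> S \<and> y \<in> T}"

definition stack_frames ::
    "nat \<Rightarrow> nat \<Rightarrow> (nat \<Rightarrow> nat \<Rightarrow> real) \<Rightarrow> (nat \<Rightarrow> nat \<Rightarrow> real) \<Rightarrow> nat \<Rightarrow> nat \<Rightarrow> real" where
  "stack_frames h n a b = join_frames n (\<lambda>t. concat h (a t) (\<lambda>_. 0)) (\<lambda>t. concat h (\<lambda>_. 0) (b t))"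

lemma sum_lessThan_double:
  fixes h :: nat
  shows "(\<Sum>j<2 * h. f j) = (\<Sum>j<h. f j) + (\<Sum>j<h. f (h + j))"
  using sum_lessThan_add[of f h h] by (simp add: mult_2)

lemma dotp_concat: "dotp (2 * h) (concat h x y) (concat h x' y') = dotp h x x' + dotp h y y'"
  unfolding dotp_def sum_lessThan_double concat_def by simp

lemma in_Rm_concat: "in_Rm (2 * h) (concat h x y)"
  unfolding in_Rm_def concat_def by auto

lemma dotp_stack_frames:
  "dotp (2 * h) (stack_frames h n a b s) (stack_frames h k c d t) =
     (if s < n then (if t < k then dotp h (a s) (c t) else 0)
      else (if t < k then 0 else dotp h (b (s - n)) (d (t - k))))"
  unfolding stack_frames_def join_frames_def by (simp add: dotp_concat)

lemma orthonormal_stack_frames: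
  "orthonormal h n a \<Longrightarrow> orthonormal h k b \<Longrightarrow> orthonormal (2 * h) (n + k) (stack_frames h n a b)"
  unfolding orthonormal_def dotp_stack_frames
  by (auto simp: stack_frames_def join_frames_def in_Rm_concat)

lemma span_stack_frames:
  "span_of (n + k) (stack_frames h n a b) = direct_sum h (span_of n a) (span_of k b)"
proof -
  have key: "lincomb (n + k) c (stack_frames h n a b) = concat h (lincomb n c a) (lincomb k (\<lambda>t. c (n + t)) b)"
    for c
  proof
    fix j show "lincomb (n + k) c (stack_frames h n a b) j = concat h (lincomb n c a) (lincomb k (\<lambda>t. c (n + t)) b) j"
      unfolding stack_frames_def lincomb_join_frames
      by (cases "j < h"; cases "j < 2 * h") (simp_all add: lincomb_def concat_def)
  qed
  show ?thesis
  proof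
    show "span_of (n + k) (stack_frames h n a b) \<subseteq> direct_sum h (span_of n a) (span_of k b)"
    proof
      fix z assume "z \<in> span_of (n + k) (stack_frames h n a b)"
      then obtain c where "z = lincomb (n + k) c (stack_frames h n a b)"
        unfolding span_of_eq_range_lincomb by auto
      then have "z = concat h (lincomb n c a) (lincomb k (\<lambda>t. c (n + t)) b)" using key by simp
      moreover have "lincomb n c a \<in> span_of n a" "lincomb k (\<lambda>t. c (n + t)) b \<in> span_of k b"
        by simp_all
      ultimately show "z \<in> direct_sum h (span_of n a) (span_of k b)"
        unfolding direct_sum_def by blast
    qed
    show "direct_sum h (span_of n a) (span_of k b) \<subseteq> span_of (n + k) (stack_frames h n a b)"
    proof
      fix z assume "z \<in> direct_sum h (span_of n a) (span_of k b)"
      then obtain c d where z: "z = concat h (lincomb n c a) (lincomb k d b)"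
        unfolding direct_sum_def span_of_eq_range_lincomb by auto
      define e where "e t = (if t < n then c t else d (t - n))" for t
      have "lincomb n e a = lincomb n c a" "lincomb k (\<lambda>t. e (n + t)) b = lincomb k d b"
        by (auto intro!: lincomb_cong simp: e_def)
      then have "z = lincomb (n + k) e (stack_frames h n a b)" using key z by simp
      then show "z \<in> span_of (n + k) (stack_frames h n a b)" by simp
    qed
  qed
qed

lemma overlap_direct_sum:
  assumes "has_onb h S1 n1" "has_onb h S2 n2" "has_onb h T1 k1" "has_onb h T2 k2"
  shows "overlap (2 * h) (direct_sum h S1 S2) (direct_sum h T1 T2) = overlap h S1 T1 + overlap h S2 T2"
proof -
  obtain a1 a2 b1 b2 where
    a1: "orthonormal h n1 a1" "S1 = span_of n1 a1" and a2: "orthonormal h n2 a2" "S2 = span_of n2 a2" and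
    b1: "orthonormal h k1 b1" "T1 = span_of k1 b1" and b2: "orthonormal h k2 b2" "T2 = span_of k2 b2"
    using assms unfolding has_onb_def by metis
  show ?thesis
    unfolding a1(2) a2(2) b1(2) b2(2) span_stack_frames[symmetric]
      overlap_span_of[OF orthonormal_stack_frames[OF a1(1) a2(1)] orthonormal_stack_frames[OF b1(1) b2(1)]]
      overlap_span_of[OF a1(1) b1(1)] overlap_span_of[OF a2(1) b2(1)]
    by (simp add: sum_lessThan_add dotp_stack_frames)
qed

lemma complemented_direct_sum:
  assumes "complemented h n1 S1" "complemented h n2 S2"
  shows "complemented (2 * h) (n1 + n2) (direct_sum h S1 S2)"
proof -
  obtain a1 b1 a2 b2 where n: "n1 \<le> h" "n2 \<le> h"
    and ab1: "orthogonal_frames h n1 (h - n1) a1 b1" "S1 = span_of n1 a1"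
    and ab2: "orthogonal_frames h n2 (h - n2) a2 b2" "S2 = span_of n2 a2"
    using assms unfolding complemented_def by metis
  have "orthogonal_frames (2 * h) (n1 + n2) ((h - n1) + (h - n2))
      (stack_frames h n1 a1 a2) (stack_frames h (h - n1) b1 b2)"
    using ab1(1) ab2(1) unfolding orthogonal_frames_def
    by (auto simp: orthonormal_stack_frames dotp_stack_frames)
  moreover have "(h - n1) + (h - n2) = 2 * h - (n1 + n2)" using n by simp
  ultimately show ?thesis
    unfolding complemented_def ab1(2) ab2(2) span_stack_frames[symmetric] using n by auto
qed

section \<open>Principal angles\<close>

lemma continuous_on_dotp:
  assumes "continuous_on S f" "continuous_on S g"
  shows "continuous_on S (\<lambda>x. dotp m (f x) (g x))"
  unfolding dotp_def
  using continuous_on_product_then_coordinatewise[OF assms(1)]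
    continuous_on_product_then_coordinatewise[OF assms(2)]
  by (intro continuous_on_sum continuous_on_mult) auto

lemma compact_cube: "compact {x :: nat \<Rightarrow> real. \<forall>j. x j \<in> {-1..1}}"
proof -
  have "compactin (product_topology (\<lambda>_. euclidean) UNIV) (PiE UNIV (\<lambda>_::nat. {-1..1::real}))"
    by (simp add: compactin_PiE)
  moreover have "PiE UNIV (\<lambda>_::nat. {-1..1::real}) = {x. \<forall>j. x j \<in> {-1..1}}"
    by (auto simp: PiE_UNIV_domain Pi_def)
  ultimately show ?thesis by (simp add: euclidean_product_topology)
qed

lemma compact_unit_vectors_span_of:
  assumes a: "orthonormal m n a"
  shows "compact {x \<in> span_of n a. dotp m x x = 1 \<and> (\<forall>j<N. dotp m x (u j) = 0)}"
proof -
  let ?E = "{x. (\<forall>j. x j = lincomb n (\<lambda>s. dotp m x (a s)) a j) \<and> dotp m x x = 1 \<and>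
    (\<forall>j<N. dotp m x (u j) = 0)}"
  have "{x \<in> span_of n a. dotp m x x = 1 \<and> (\<forall>j<N. dotp m x (u j) = 0)} = {x. \<forall>j. x j \<in> {-1..1}} \<inter> ?E"
  proof (intro equalityI subsetI)
    fix x assume x: "x \<in> {x \<in> span_of n a. dotp m x x = 1 \<and> (\<forall>j<N. dotp m x (u j) = 0)}"
    have "x j \<in> {-1..1}" for j
    proof (cases "j < m")
      case True
      then have "(x j)\<^sup>2 \<le> dotp m x x"
        unfolding dotp_def power2_eq_square by (intro member_le_sum) auto
      then show ?thesis using x abs_square_le_1[of "x j"] by auto
    next
      case False
      have "in_Rm m x" using span_of_in_Rm[OF a] x by blast
      then show ?thesis using False unfolding in_Rm_def by simp
    qed
    moreover have "x j = lincomb n (\<lambda>s. dotp m x (a s)) a j" for j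
      using x orthonormal_expansion[OF a] by auto
    ultimately show "x \<in> {x. \<forall>j. x j \<in> {-1..1}} \<inter> ?E" using x by auto
  next
    fix x assume "x \<in> {x. \<forall>j. x j \<in> {-1..1}} \<inter> ?E"
    then have "x = lincomb n (\<lambda>s. dotp m x (a s)) a" and "dotp m x x = 1 \<and> (\<forall>j<N. dotp m x (u j) = 0)"
      by (auto simp: fun_eq_iff)
    moreover from this(1) have "x \<in> span_of n a" by (rule ssubst) (rule lincomb_in_span_of)
    ultimately show "x \<in> {x \<in> span_of n a. dotp m x x = 1 \<and> (\<forall>j<N. dotp m x (u j) = 0)}" by simp
  qed
  moreover have "closed ?E"
  proof -
    have "continuous_on UNIV (\<lambda>x. lincomb n (\<lambda>s. dotp m x (a s)) a j)" for j
      unfolding lincomb_def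
      by (intro continuous_on_sum continuous_on_mult continuous_on_dotp continuous_on_id continuous_on_const)
    then show ?thesis
      by (intro closed_Collect_conj closed_Collect_all closed_Collect_imp open_Collect_const
          closed_Collect_eq continuous_on_dotp continuous_on_id continuous_on_const
          continuous_on_product_coordinates)
  qed
  ultimately show ?thesis using compact_cube by (simp add: compact_Int_closed)
qed

lemma dotp_attains_max:
  assumes "compact X" "compact Y" "X \<noteq> {}" "Y \<noteq> {}"
  shows "\<exists>x\<in>X. \<exists>y\<in>Y. \<forall>x'\<in>X. \<forall>y'\<in>Y. dotp m x' y' \<le> dotp m x y"
proof -
  have "continuous_on (X \<times> Y) (\<lambda>p. dotp m (fst p) (snd p))"
    by (intro continuous_on_dotp continuous_on_fst continuous_on_snd continuous_on_id)
  moreover have "compact (X \<times> Y)" "X \<times> Y \<noteq> {}" using assms by (auto intro: compact_Times)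
  ultimately obtain p where "p \<in> X \<times> Y" "\<forall>q\<in>X \<times> Y. dotp m (fst q) (snd q) \<le> dotp m (fst p) (snd p)"
    using continuous_attains_sup by blast
  then show ?thesis by force
qed

lemma principal_vectors_swap:
  assumes pv: "principal_vectors m n P Q u v"
  shows "principal_vectors m n Q P v u"
proof -
  have max: "dotp m y x \<le> dotp m (v k) (u k)"
    if "k < n" "y \<in> Q" "x \<in> P" "dotp m y y = 1" "dotp m x x = 1"
      "\<forall>j<k. dotp m y (v j) = 0 \<and> dotp m x (u j) = 0" for k x y
  proof -
    have "dotp m x y \<le> dotp m (u k) (v k)" using pv that unfolding principal_vectors_def by blast
    then show ?thesis by (simp only: dotp_commute[of m y x] dotp_commute[of m "v k" "u k"])
  qed
  show ?thesis using pv max unfolding principal_vectors_def by blast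
qed

lemma principal_vectors_Suc:
  "principal_vectors m (Suc N) P Q u v \<longleftrightarrow> principal_vectors m N P Q u v \<and>
     u N \<in> P \<and> v N \<in> Q \<and> dotp m (u N) (u N) = 1 \<and> dotp m (v N) (v N) = 1 \<and>
     (\<forall>j<N. dotp m (u N) (u j) = 0 \<and> dotp m (v N) (v j) = 0) \<and>
     (\<forall>x\<in>P. \<forall>y\<in>Q. dotp m x x = 1 \<and> dotp m y y = 1 \<and>
        (\<forall>j<N. dotp m x (u j) = 0 \<and> dotp m y (v j) = 0) \<longrightarrow> dotp m x y \<le> dotp m (u N) (v N))"
  unfolding principal_vectors_def All_less_Suc by blast

lemma principal_vectors_cong:
  assumes "\<And>k. k < N \<Longrightarrow> u' k = u k" "\<And>k. k < N \<Longrightarrow> v' k = v k"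
  shows "principal_vectors m N P Q u' v' \<longleftrightarrow> principal_vectors m N P Q u v"
  unfolding principal_vectors_def using assms by simp

lemma principal_vectors_orthonormal:
  assumes pv: "principal_vectors m N P Q u v" and P: "\<And>x. x \<in> P \<Longrightarrow> in_Rm m x"
  shows "orthonormal m N u"
proof -
  have h: "u k \<in> P \<and> dotp m (u k) (u k) = 1 \<and> (\<forall>j<k. dotp m (u k) (u j) = 0)" if "k < N" for k
    using pv that unfolding principal_vectors_def by blast
  have "dotp m (u s) (u t) = (if s = t then 1 else 0)" if "s < N" "t < N" for s t
    using h[OF that(1)] h[OF that(2)] dotp_commute[of m "u s" "u t"]
    by (cases s t rule: linorder_cases) auto
  then show ?thesis unfolding orthonormal_def using h P by blast
qed

lemma max_on_unit_circle_at_axis: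
  fixes \<alpha> \<beta> :: real
  assumes max: "\<And>p q. p\<^sup>2 + q\<^sup>2 = 1 \<Longrightarrow> p * \<alpha> + q * \<beta> \<le> \<alpha>"
  shows "\<beta> = 0"
proof (rule ccontr)
  assume "\<beta> \<noteq> 0"
  define r where "r = sqrt (\<alpha>\<^sup>2 + \<beta>\<^sup>2)"
  have r: "0 < r" "r\<^sup>2 = \<alpha>\<^sup>2 + \<beta>\<^sup>2" unfolding r_def using \<open>\<beta> \<noteq> 0\<close> by (auto simp: add_nonneg_pos)
  have "(\<alpha> / r)\<^sup>2 + (\<beta> / r)\<^sup>2 = (\<alpha>\<^sup>2 + \<beta>\<^sup>2) / r\<^sup>2"
    by (simp add: power_divide add_divide_distrib)
  also have "\<dots> = 1" using r \<open>\<beta> \<noteq> 0\<close> by simp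
  finally have "(\<alpha> / r)\<^sup>2 + (\<beta> / r)\<^sup>2 = 1" .
  then have "(\<alpha> / r) * \<alpha> + (\<beta> / r) * \<beta> \<le> \<alpha>" by (rule max)
  moreover have "(\<alpha> / r) * \<alpha> + (\<beta> / r) * \<beta> = r"
  proof -
    have "(\<alpha> / r) * \<alpha> + (\<beta> / r) * \<beta> = r\<^sup>2 / r"
      using r(2) by (simp add: power2_eq_square add_divide_distrib)
    also have "\<dots> = r" using r(1) by (simp add: power2_eq_square)
    finally show ?thesis .
  qed
  ultimately have "r\<^sup>2 \<le> \<alpha>\<^sup>2" using r(1) by (simp add: power_mono)
  then show False using r(2) \<open>\<beta> \<noteq> 0\<close> by simp
qed

lemma principal_vectors_orthogonal_cross:
  assumes pv: "principal_vectors m n P (span_of n' b) u v" and jk: "j < k" "k < n"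
  shows "dotp m (u j) (v k) = 0"
proof -
  have vk: "v k \<in> span_of n' b" "dotp m (v k) (v k) = 1" "\<forall>i<k. dotp m (v k) (v i) = 0"
    using pv jk unfolding principal_vectors_def by auto
  have uj: "u j \<in> P" "v j \<in> span_of n' b" "dotp m (u j) (u j) = 1" "dotp m (v j) (v j) = 1"
    "\<forall>i<j. dotp m (u j) (u i) = 0 \<and> dotp m (v j) (v i) = 0"
    "\<forall>x\<in>P. \<forall>y\<in>span_of n' b. dotp m x x = 1 \<and> dotp m y y = 1 \<and>
       (\<forall>i<j. dotp m x (u i) = 0 \<and> dotp m y (v i) = 0) \<longrightarrow> dotp m x y \<le> dotp m (u j) (v j)"
    using pv jk unfolding principal_vectors_def by (auto dest: less_trans)
  \<comment> \<open>u j is a best partner also for the admissible unit vectors p v j + q v k.\<close>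
  have "p * dotp m (u j) (v j) + q * dotp m (u j) (v k) \<le> dotp m (u j) (v j)"
    if pq: "p\<^sup>2 + q\<^sup>2 = 1" for p q
  proof -
    define y where "y = (\<lambda>i. p * v j i + q * v k i)"
    have "y \<in> span_of n' b" unfolding y_def using uj(2) vk(1) by (intro span_of_add span_of_scale)
    moreover have "dotp m y y = 1"
    proof -
      have "dotp m (v j) (v k) = 0" using vk(3) jk(1) dotp_commute[of m "v j" "v k"] by simp
      then show ?thesis using uj(4) vk(2) pq dotp_commute[of m "v k" "v j"]
        unfolding y_def dotp_add_left dotp_add_right dotp_scale_left dotp_scale_right
        by (simp add: power2_eq_square)
    qed
    moreover have "\<forall>i<j. dotp m y (v i) = 0"
      unfolding y_def dotp_add_left dotp_scale_left using uj(5) vk(3) jk(1) by simp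
    ultimately have "dotp m (u j) y \<le> dotp m (u j) (v j)" using uj by blast
    then show ?thesis unfolding y_def dotp_add_right dotp_scale_right .
  qed
  then show ?thesis by (rule max_on_unit_circle_at_axis)
qed

lemma principal_vectors_exist:
  assumes a: "orthonormal m n a" and b: "orthonormal m n b" and "N \<le> n"
  shows "\<exists>u v. principal_vectors m N (span_of n a) (span_of n b) u v"
  using \<open>N \<le> n\<close>
proof (induction N)
  case 0
  show ?case by (simp add: principal_vectors_def)
next
  case (Suc N)
  then obtain u v where pv: "principal_vectors m N (span_of n a) (span_of n b) u v" by auto
  have u: "orthonormal m N u"
    using principal_vectors_orthonormal[OF pv] span_of_in_Rm[OF a] by blast
  have v: "orthonormal m N v"
    using principal_vectors_orthonormal[OF principal_vectors_swap[OF pv]] span_of_in_Rm[OF b] by blast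
  have ua: "u j \<in> span_of n a" and vb: "v j \<in> span_of n b" if "j < N" for j
    using pv that unfolding principal_vectors_def by auto
  define X where "X = {x \<in> span_of n a. dotp m x x = 1 \<and> (\<forall>j<N. dotp m x (u j) = 0)}"
  define Y where "Y = {y \<in> span_of n b. dotp m y y = 1 \<and> (\<forall>j<N. dotp m y (v j) = 0)}"
  have X: "X \<noteq> {}" unfolding X_def using exists_unit_orthogonal[OF a u] Suc.prems ua by auto
  have Y: "Y \<noteq> {}" unfolding Y_def using exists_unit_orthogonal[OF b v] Suc.prems vb by auto
  have "compact X" "compact Y"
    unfolding X_def Y_def using a b by (simp_all add: compact_unit_vectors_span_of)
  from dotp_attains_max[OF this X Y] obtain x y where x: "x \<in> X" and y: "y \<in> Y"
    and max: "\<forall>x'\<in>X. \<forall>y'\<in>Y. dotp m x' y' \<le> dotp m x y"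
    by blast
  have "principal_vectors m N (span_of n a) (span_of n b) (u(N := x)) (v(N := y))"
    using pv by (subst principal_vectors_cong) auto
  then have "principal_vectors m (Suc N) (span_of n a) (span_of n b) (u(N := x)) (v(N := y))"
    unfolding principal_vectors_Suc using x y max unfolding X_def Y_def by auto
  then show ?case by blast
qed

lemma overlap_principal_vectors:
  assumes a: "orthonormal m n a" and b: "orthonormal m n b"
    and pv: "principal_vectors m n (span_of n a) (span_of n b) u v"
  shows "overlap m (span_of n a) (span_of n b) = (\<Sum>k<n. (dotp m (u k) (v k))\<^sup>2)"
proof -
  have u: "orthonormal m n u"
    using principal_vectors_orthonormal[OF pv] span_of_in_Rm[OF a] by blast
  have v: "orthonormal m n v"
    using principal_vectors_orthonormal[OF principal_vectors_swap[OF pv]] span_of_in_Rm[OF b] by blast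
  have "span_of n u = span_of n a" "span_of n v = span_of n b"
    using orthonormal_span_eq[OF a u] orthonormal_span_eq[OF b v] pv
    unfolding principal_vectors_def by simp_all
  then have "overlap m (span_of n a) (span_of n b) = (\<Sum>s<n. \<Sum>t<n. (dotp m (u s) (v t))\<^sup>2)"
    using overlap_span_of[OF u v] by simp
  also have "\<dots> = (\<Sum>s<n. \<Sum>t<n. if t = s then (dotp m (u s) (v t))\<^sup>2 else 0)"
  proof (intro sum.cong refl)
    fix s t assume "s \<in> {..<n}" "t \<in> {..<n}"
    then show "(dotp m (u s) (v t))\<^sup>2 = (if t = s then (dotp m (u s) (v t))\<^sup>2 else 0)"
      using principal_vectors_orthogonal_cross[OF pv, of s t]
        principal_vectors_orthogonal_cross[OF principal_vectors_swap[OF pv], of t s]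
      by (cases s t rule: linorder_cases) (auto simp: dotp_commute)
  qed
  also have "\<dots> = (\<Sum>k<n. (dotp m (u k) (v k))\<^sup>2)" by simp
  finally show ?thesis .
qed

lemma subspace_dist_eq_overlap:
  assumes "has_onb m S n" "has_onb m T n"
  shows "subspace_dist m n S T = sqrt (real n - overlap m S T)"
proof -
  obtain a b where a: "orthonormal m n a" and S: "S = span_of n a"
    and b: "orthonormal m n b" and T: "T = span_of n b"
    using assms unfolding has_onb_def by blast
  have "\<exists>d u v. principal_vectors m n S T u v \<and> d = sqrt (\<Sum>k<n. 1 - (dotp m (u k) (v k))\<^sup>2)"
    using principal_vectors_exist[OF a b order_refl] S T by blast
  from someI_ex[OF this] obtain u v where pv: "principal_vectors m n S T u v"
    and dist: "subspace_dist m n S T = sqrt (\<Sum>k<n. 1 - (dotp m (u k) (v k))\<^sup>2)"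
    unfolding subspace_dist_def by blast
  show ?thesis
    using dist overlap_principal_vectors[OF a b pv[unfolded S T]] S T by (simp add: sum_subtractf)
qed

section \<open>The matrices \<open>Q\<^sub>i\<close>\<close>

definition frobenius :: "nat \<Rightarrow> (nat \<Rightarrow> nat \<Rightarrow> real) \<Rightarrow> (nat \<Rightarrow> nat \<Rightarrow> real) \<Rightarrow> real" where
  "frobenius n Q Q' = (\<Sum>r<n. \<Sum>c<n. Q r c * Q' r c)"

lemma frobenius_self: "orthogonal_matrix n Q \<Longrightarrow> frobenius n Q Q = n"
  unfolding orthogonal_matrix_def frobenius_def by simp

lemma sum_lessThan_2: "(\<Sum>b<(2::nat). f b) = f 0 + f 1"
  by (simp add: numeral_2_eq_2)

lemma kron2_row_products:
  assumes h: "0 < h" and r: "r < 2 * h" and s: "s < 2 * h"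
  shows "(\<Sum>c<2 * h. kron2 h B Q r c * kron2 h B' Q' s c)
     = (\<Sum>b<2. B (r div h) b * B' (s div h) b) * (\<Sum>c<h. Q (r mod h) c * Q' (s mod h) c)"
proof -
  have "(\<Sum>c<2 * h. kron2 h B Q r c * kron2 h B' Q' s c)
     = (\<Sum>c<h. B (r div h) 0 * B' (s div h) 0 * (Q (r mod h) c * Q' (s mod h) c))
     + (\<Sum>c<h. B (r div h) 1 * B' (s div h) 1 * (Q (r mod h) c * Q' (s mod h) c))"
    unfolding sum_lessThan_double using r s h
    by (intro arg_cong2[where f = "(+)"] sum.cong) (auto simp: kron2_def)
  also have "\<dots> = (\<Sum>b<2. B (r div h) b * B' (s div h) b) * (\<Sum>c<h. Q (r mod h) c * Q' (s mod h) c)"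
    by (simp add: sum_lessThan_2 sum_distrib_left[symmetric] distrib_right)
  finally show ?thesis .
qed

lemma orthogonal_matrix_kron2:
  assumes h: "0 < h" and B: "orthogonal_matrix 2 B" and Q: "orthogonal_matrix h Q"
  shows "orthogonal_matrix (2 * h) (kron2 h B Q)"
  unfolding orthogonal_matrix_def
proof (intro allI impI)
  fix r s assume r: "r < 2 * h" and s: "s < 2 * h"
  have "r div h < 2" "s div h < 2" using r s h by (auto simp: less_mult_imp_div_less mult.commute)
  moreover have "r mod h < h" "s mod h < h" using h by auto
  moreover have "r = s \<longleftrightarrow> r div h = s div h \<and> r mod h = s mod h" by (metis div_mult_mod_eq)
  ultimately show "(\<Sum>c<2 * h. kron2 h B Q r c * kron2 h B Q s c) = (if r = s then 1 else 0)"
    unfolding kron2_row_products[OF h r s] using B Q unfolding orthogonal_matrix_def by auto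
qed

lemma frobenius_kron2:
  assumes h: "0 < h"
  shows "frobenius (2 * h) (kron2 h B Q) (kron2 h B' Q') = frobenius 2 B B' * frobenius h Q Q'"
proof -
  have "frobenius (2 * h) (kron2 h B Q) (kron2 h B' Q') =
     (\<Sum>r<2 * h. (\<Sum>b<2. B (r div h) b * B' (r div h) b) * (\<Sum>c<h. Q (r mod h) c * Q' (r mod h) c))"
    unfolding frobenius_def using kron2_row_products[OF h] by (intro sum.cong) auto
  also have "\<dots> = (\<Sum>r<h. (\<Sum>b<2. B 0 b * B' 0 b) * (\<Sum>c<h. Q r c * Q' r c))
      + (\<Sum>r<h. (\<Sum>b<2. B 1 b * B' 1 b) * (\<Sum>c<h. Q r c * Q' r c))"
    unfolding sum_lessThan_double using h by (intro arg_cong2[where f = "(+)"] sum.cong) auto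
  also have "\<dots> = (\<Sum>b<2. B 0 b * B' 0 b) * frobenius h Q Q' + (\<Sum>b<2. B 1 b * B' 1 b) * frobenius h Q Q'"
    unfolding frobenius_def by (simp only: sum_distrib_left)
  also have "\<dots> = frobenius 2 B B' * frobenius h Q Q'"
    unfolding frobenius_def sum_lessThan_2 by (simp add: algebra_simps)
  finally show ?thesis .
qed

definition sign_patterns :: "(nat \<Rightarrow> nat \<Rightarrow> real) set" where
  "sign_patterns = {B_id, B_diag, B_swap, B_rot}"

lemma sign_patterns_distinct:
  "B_id \<noteq> B_diag" "B_id \<noteq> B_swap" "B_id \<noteq> B_rot"
  "B_diag \<noteq> B_swap" "B_diag \<noteq> B_rot" "B_swap \<noteq> B_rot"
  by (auto simp: fun_eq_iff B_id_def B_diag_def B_swap_def B_rot_def dest!: spec[of _ 1] spec[of _ 0])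

lemma card_sign_patterns: "card sign_patterns = 4"
  unfolding sign_patterns_def using sign_patterns_distinct by (simp add: sign_patterns_distinct[symmetric])

lemma orthogonal_matrix_sign_patterns: "B \<in> sign_patterns \<Longrightarrow> orthogonal_matrix 2 B"
  unfolding sign_patterns_def orthogonal_matrix_def less_2_cases_iff
  by (auto simp: sum_lessThan_2 B_id_def B_diag_def B_swap_def B_rot_def)

lemma frobenius_sign_patterns:
  "B \<in> sign_patterns \<Longrightarrow> B' \<in> sign_patterns \<Longrightarrow> frobenius 2 B B' = (if B = B' then 2 else 0)"
  unfolding sign_patterns_def using sign_patterns_distinct sign_patterns_distinct[symmetric]
  by (auto simp: frobenius_def sum_lessThan_2 B_id_def B_diag_def B_swap_def B_rot_def)

lemma Qs_Suc_Suc: "Qs (Suc (Suc k)) = (\<lambda>(B, Q). kron2 (2 ^ k) B Q) ` (sign_patterns \<times> Qs (Suc k))"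
  unfolding sign_patterns_def by auto

definition orthogonal_family :: "nat \<Rightarrow> (nat \<Rightarrow> nat \<Rightarrow> real) set \<Rightarrow> bool" where
  "orthogonal_family h QQ \<longleftrightarrow> finite QQ \<and> (\<forall>Q\<in>QQ. orthogonal_matrix h Q) \<and>
     (\<forall>Q\<in>QQ. \<forall>Q'\<in>QQ. Q \<noteq> Q' \<longrightarrow> frobenius h Q Q' = 0 \<or> frobenius h Q Q' = - real h)"

lemma orthogonal_family_kron2:
  assumes h: "0 < h" and QQ: "orthogonal_family h QQ"
  defines "f \<equiv> \<lambda>(B, Q). kron2 h B Q"
  shows "orthogonal_family (2 * h) (f ` (sign_patterns \<times> QQ)) \<and>
    card (f ` (sign_patterns \<times> QQ)) = 4 * card QQ"
proof -
  have frob: "frobenius (2 * h) (f p) (f p') =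
      (if p = p' then 2 * real h else if fst p = fst p' then 2 * frobenius h (snd p) (snd p') else 0)"
    if "p \<in> sign_patterns \<times> QQ" "p' \<in> sign_patterns \<times> QQ" for p p'
    using that QQ frobenius_kron2[OF h] frobenius_sign_patterns frobenius_self
    unfolding f_def orthogonal_family_def by (auto split: prod.splits)
  have vals: "frobenius (2 * h) (f p) (f p') = 0 \<or> frobenius (2 * h) (f p) (f p') = - real (2 * h)"
    if p: "p \<in> sign_patterns \<times> QQ" "p' \<in> sign_patterns \<times> QQ" "p \<noteq> p'" for p p'
  proof (cases "fst p = fst p'")
    case True
    then have "snd p \<noteq> snd p'" using p(3) by (metis prod.expand)
    moreover have "snd p \<in> QQ" "snd p' \<in> QQ" using p by auto
    ultimately have "frobenius h (snd p) (snd p') \<in> {0, - real h}"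
      using QQ unfolding orthogonal_family_def by auto
    then show ?thesis using frob[OF p(1,2)] p(3) True by auto
  qed (use frob[OF p(1,2)] in auto)
  have "inj_on f (sign_patterns \<times> QQ)"
  proof (rule inj_onI, rule ccontr)
    fix p p' assume p: "p \<in> sign_patterns \<times> QQ" "p' \<in> sign_patterns \<times> QQ" "f p = f p'" "p \<noteq> p'"
    have "frobenius (2 * h) (f p) (f p') = 2 * real h" using frob[OF p(1) p(1)] p(3) by simp
    then show False using vals[OF p(1,2,4)] h by auto
  qed
  then have "card (f ` (sign_patterns \<times> QQ)) = 4 * card QQ"
    by (simp add: card_image card_cartesian_product card_sign_patterns)
  moreover have "orthogonal_family (2 * h) (f ` (sign_patterns \<times> QQ))"
    unfolding orthogonal_family_def
  proof (intro conjI ballI impI)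
    show "finite (f ` (sign_patterns \<times> QQ))"
      using QQ by (simp add: orthogonal_family_def sign_patterns_def)
    fix Q assume "Q \<in> f ` (sign_patterns \<times> QQ)"
    then show "orthogonal_matrix (2 * h) Q"
      using QQ orthogonal_matrix_kron2[OF h] orthogonal_matrix_sign_patterns
      unfolding orthogonal_family_def f_def by auto
  next
    fix Q Q' assume "Q \<in> f ` (sign_patterns \<times> QQ)" "Q' \<in> f ` (sign_patterns \<times> QQ)" "Q \<noteq> Q'"
    then obtain p p' where "p \<in> sign_patterns \<times> QQ" "p' \<in> sign_patterns \<times> QQ" "p \<noteq> p'"
      and "Q = f p" "Q' = f p'" by blast
    then show "frobenius (2 * h) Q Q' = 0 \<or> frobenius (2 * h) Q Q' = - real (2 * h)"
      using vals by simp
  qed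
  ultimately show ?thesis by simp
qed

lemma Qs_orthogonal_family:
  assumes "1 \<le> i"
  shows "orthogonal_family (2 ^ (i - 1)) (Qs i) \<and> card (Qs i) = 2 * 4 ^ (i - 1)"
  using assms
proof (induction i rule: nat_induct_at_least)
  case base
  define q :: "real \<Rightarrow> nat \<Rightarrow> nat \<Rightarrow> real" where "q x = (\<lambda>r c. if r = 0 \<and> c = 0 then x else 0)" for x
  have "Qs 1 = {q 1, q (-1)}" unfolding q_def by simp
  moreover have "q 1 \<noteq> q (-1)" unfolding q_def by (auto simp: fun_eq_iff)
  ultimately show ?case
    unfolding orthogonal_family_def by (auto simp: orthogonal_matrix_def frobenius_def q_def)
next
  case (Suc i)
  then obtain k where i: "i = Suc k" by (cases i) auto
  have "(2::nat) ^ (Suc i - 1) = 2 * 2 ^ k" "(4::nat) ^ (Suc i - 1) = 4 * 4 ^ k" using i by simp_all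
  then show ?case
    using orthogonal_family_kron2[of "2 ^ k" "Qs (Suc k)"] Suc.IH unfolding i Qs_Suc_Suc by simp
qed

section \<open>Graph subspaces\<close>

definition graph_frame :: "nat \<Rightarrow> (nat \<Rightarrow> nat \<Rightarrow> real) \<Rightarrow> nat \<Rightarrow> nat \<Rightarrow> real" where
  "graph_frame h Q r = (\<lambda>j. IQ h Q r j / sqrt 2)"

lemma graph_frame_eq_concat:
  "r < h \<Longrightarrow> graph_frame h Q r = concat h (\<lambda>c. (1 / sqrt 2) * std_vec r c) (\<lambda>c. (1 / sqrt 2) * Q r c)"
  unfolding graph_frame_def IQ_def concat_def std_vec_def by (auto simp: fun_eq_iff)

lemma dotp_graph_frame_concat:
  assumes "r < h"
  shows "dotp (2 * h) (graph_frame h Q r) (concat h x y) = (x r + dotp h (Q r) y) / sqrt 2"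
  unfolding graph_frame_eq_concat[OF assms] dotp_concat dotp_scale_left dotp_std_vec[OF assms]
  by (simp add: add_divide_distrib)

lemma dotp_graph_frame:
  assumes "r < h" "s < h"
  shows "dotp (2 * h) (graph_frame h Q r) (graph_frame h Q' s) = ((if r = s then 1 else 0) + dotp h (Q r) (Q' s)) / 2"
  unfolding graph_frame_eq_concat[OF assms(2)] dotp_graph_frame_concat[OF assms(1)] dotp_scale_right
  by (simp add: std_vec_def add_divide_distrib)

lemma orthogonal_matrix_dotp_rows:
  "orthogonal_matrix h Q \<Longrightarrow> r < h \<Longrightarrow> s < h \<Longrightarrow> dotp h (Q r) (Q s) = (if r = s then 1 else 0)"
  unfolding orthogonal_matrix_def dotp_def by simp

lemma orthogonal_matrix_norm:
  assumes Q: "orthogonal_matrix h Q"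
  shows "(\<Sum>r<h. (dotp h (Q r) y)\<^sup>2) = dotp h y y"
proof -
  have "(\<Sum>r<h. (dotp h (Q r) y)\<^sup>2) = (\<Sum>r<h. \<Sum>c<h. \<Sum>d<h. Q r c * Q r d * (y c * y d))"
    unfolding dotp_def power2_eq_square sum_product by (simp add: mult_ac)
  also have "\<dots> = (\<Sum>c<h. \<Sum>d<h. \<Sum>r<h. Q r c * Q r d * (y c * y d))"
    by (subst sum.swap, rule sum.cong, rule refl, rule sum.swap)
  also have "\<dots> = (\<Sum>c<h. \<Sum>d<h. (\<Sum>r<h. Q r c * Q r d) * (y c * y d))"
    by (simp add: sum_distrib_right)
  also have "\<dots> = (\<Sum>c<h. \<Sum>d<h. if c = d then y c * y d else 0)"
    using orthogonal_matrix_columns[OF Q] by (intro sum.cong) auto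
  also have "\<dots> = dotp h y y" by (simp add: dotp_def)
  finally show ?thesis .
qed

lemma orthonormal_graph_frame:
  assumes "orthogonal_matrix h Q"
  shows "orthonormal (2 * h) h (graph_frame h Q)"
  unfolding orthonormal_def
proof (intro conjI allI impI)
  fix t assume "t < h"
  then show "in_Rm (2 * h) (graph_frame h Q t)" by (simp add: graph_frame_eq_concat in_Rm_concat)
next
  fix s t assume st: "s < h" "t < h"
  show "dotp (2 * h) (graph_frame h Q s) (graph_frame h Q t) = (if s = t then 1 else 0)"
    unfolding dotp_graph_frame[OF st] orthogonal_matrix_dotp_rows[OF assms st] by simp
qed

lemma span_of_cong: "(\<And>t. t < n \<Longrightarrow> a t = b t) \<Longrightarrow> span_of n a = span_of n b"
  unfolding span_of_def by simp

lemma span_of_divide: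
  assumes "r \<noteq> 0"
  shows "span_of n (\<lambda>t j. a t j / r) = span_of n a"
proof
  have "(\<lambda>j. inverse r * a t j) \<in> span_of n a" if "t < n" for t
    using span_of_scale[OF span_of_basis[OF that]] .
  then show "span_of n (\<lambda>t j. a t j / r) \<subseteq> span_of n a"
    by (intro span_of_mono) (simp add: divide_inverse mult.commute)
  have "(\<lambda>j. r * (a t j / r)) \<in> span_of n (\<lambda>t j. a t j / r)" if "t < n" for t
    using span_of_scale[OF span_of_basis[OF that]] .
  then show "span_of n a \<subseteq> span_of n (\<lambda>t j. a t j / r)"
    using assms by (intro span_of_mono) simp
qed

lemma rowspace_eq_span_of:
  assumes "\<And>k j. m \<le> j \<Longrightarrow> A k j = 0"
  shows "rowspace n m A = span_of n A"
proof -
  have "(\<lambda>j. if j < m then \<Sum>k<n. c k * A k j else 0) = (\<lambda>j. \<Sum>k<n. c k * A k j)" for c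
    using assms by (auto simp: fun_eq_iff)
  then show ?thesis unfolding rowspace_def span_of_def by simp
qed

lemma span_graph_frame: "rowspace h (2 * h) (IQ h Q) = span_of h (graph_frame h Q)"
  unfolding graph_frame_def span_of_divide[of "sqrt 2", simplified]
  by (rule rowspace_eq_span_of) (simp add: IQ_def)

lemma complemented_graph:
  assumes Q: "orthogonal_matrix h Q"
  shows "complemented (2 * h) h (rowspace h (2 * h) (IQ h Q))"
proof -
  have Q': "orthogonal_matrix h (\<lambda>r c. - Q r c)" using Q by (simp add: orthogonal_matrix_def)
  have "dotp (2 * h) (graph_frame h Q r) (graph_frame h (\<lambda>r c. - Q r c) s) = 0" if "r < h" "s < h" for r s
  proof -
    have "dotp h (Q r) (\<lambda>c. - Q s c) = - dotp h (Q r) (Q s)" by (simp add: dotp_def sum_negf)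
    then show ?thesis unfolding dotp_graph_frame[OF that] using orthogonal_matrix_dotp_rows[OF Q that] by simp
  qed
  then have "orthogonal_frames (2 * h) h (2 * h - h) (graph_frame h Q) (graph_frame h (\<lambda>r c. - Q r c))"
    using orthonormal_graph_frame[OF Q] orthonormal_graph_frame[OF Q'] by (simp add: orthogonal_frames_def)
  then show ?thesis unfolding complemented_def span_graph_frame by auto
qed

lemma overlap_graph_direct_sum:
  assumes Q: "orthogonal_matrix h Q" and "has_onb h T1 k1" "has_onb h T2 k2"
  shows "overlap (2 * h) (rowspace h (2 * h) (IQ h Q)) (direct_sum h T1 T2) = real (k1 + k2) / 2"
proof -
  obtain c1 c2 where c1: "orthonormal h k1 c1" "T1 = span_of k1 c1"
    and c2: "orthonormal h k2 c2" "T2 = span_of k2 c2"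
    using assms(2,3) unfolding has_onb_def by blast
  have upper: "(\<Sum>r<h. (dotp (2 * h) (graph_frame h Q r) (concat h x (\<lambda>_. 0)))\<^sup>2) = dotp h x x / 2" for x
  proof -
    have "(\<Sum>r<h. (dotp (2 * h) (graph_frame h Q r) (concat h x (\<lambda>_. 0)))\<^sup>2) = (\<Sum>r<h. (x r)\<^sup>2) / 2"
      by (simp add: dotp_graph_frame_concat power_divide sum_divide_distrib[symmetric])
    also have "\<dots> = dotp h x x / 2" by (simp add: dotp_def power2_eq_square)
    finally show ?thesis .
  qed
  have lower: "(\<Sum>r<h. (dotp (2 * h) (graph_frame h Q r) (concat h (\<lambda>_. 0) y))\<^sup>2) = dotp h y y / 2" for y
    using orthogonal_matrix_norm[OF Q, of y]
    by (simp add: dotp_graph_frame_concat power_divide sum_divide_distrib[symmetric])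
  have "overlap (2 * h) (rowspace h (2 * h) (IQ h Q)) (direct_sum h T1 T2)
      = (\<Sum>r<h. \<Sum>t<k1 + k2. (dotp (2 * h) (graph_frame h Q r) (stack_frames h k1 c1 c2 t))\<^sup>2)"
    unfolding span_graph_frame c1(2) c2(2) span_stack_frames[symmetric]
    by (rule overlap_span_of[OF orthonormal_graph_frame[OF Q] orthonormal_stack_frames[OF c1(1) c2(1)]])
  also have "\<dots> = (\<Sum>t<k1 + k2. \<Sum>r<h. (dotp (2 * h) (graph_frame h Q r) (stack_frames h k1 c1 c2 t))\<^sup>2)"
    by (rule sum.swap)
  also have "\<dots> = (\<Sum>t<k1. dotp h (c1 t) (c1 t) / 2) + (\<Sum>t<k2. dotp h (c2 t) (c2 t) / 2)"
    by (simp add: sum_lessThan_add stack_frames_def join_frames_def upper lower)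
  also have "\<dots> = real (k1 + k2) / 2"
    using c1(1) c2(1) by (simp add: orthonormal_def add_divide_distrib)
  finally show ?thesis .
qed

lemma overlap_graph_graph:
  assumes Q: "orthogonal_matrix h Q" and Q': "orthogonal_matrix h Q'"
  shows "overlap (2 * h) (rowspace h (2 * h) (IQ h Q)) (rowspace h (2 * h) (IQ h Q'))
    = (h + frobenius h Q Q') / 2"
proof -
  have column: "(\<Sum>r<h. (dotp (2 * h) (graph_frame h Q r) (graph_frame h Q' s))\<^sup>2)
      = (1 + dotp h (Q s) (Q' s)) / 2" if s: "s < h" for s
  proof -
    have "(\<Sum>r<h. (dotp (2 * h) (graph_frame h Q r) (graph_frame h Q' s))\<^sup>2)
        = (\<Sum>r<h. ((if r = s then 1 else 0) + dotp h (Q r) (Q' s))\<^sup>2) / 4"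
      using s by (simp add: dotp_graph_frame power_divide sum_divide_distrib[symmetric])
    also have "\<dots> = (\<Sum>r<h. (if r = s then 1 + 2 * dotp h (Q r) (Q' s) else 0) + (dotp h (Q r) (Q' s))\<^sup>2) / 4"
      by (intro arg_cong[where f = "\<lambda>x. x / 4"] sum.cong) (auto simp: power2_eq_square algebra_simps)
    also have "\<dots> = (1 + 2 * dotp h (Q s) (Q' s) + dotp h (Q' s) (Q' s)) / 4"
      using s orthogonal_matrix_norm[OF Q, of "Q' s"] by (simp add: sum.distrib)
    also have "\<dots> = (1 + dotp h (Q s) (Q' s)) / 2"
      using orthogonal_matrix_dotp_rows[OF Q' s s] by simp
    finally show ?thesis .
  qed
  have "overlap (2 * h) (rowspace h (2 * h) (IQ h Q)) (rowspace h (2 * h) (IQ h Q'))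
      = (\<Sum>r<h. \<Sum>s<h. (dotp (2 * h) (graph_frame h Q r) (graph_frame h Q' s))\<^sup>2)"
    unfolding span_graph_frame
    by (rule overlap_span_of[OF orthonormal_graph_frame[OF Q] orthonormal_graph_frame[OF Q']])
  also have "\<dots> = (\<Sum>s<h. \<Sum>r<h. (dotp (2 * h) (graph_frame h Q r) (graph_frame h Q' s))\<^sup>2)"
    by (rule sum.swap)
  also have "\<dots> = (\<Sum>s<h. (1 + dotp h (Q s) (Q' s)) / 2)" by (simp add: column)
  also have "\<dots> = (h + frobenius h Q Q') / 2"
    by (simp add: frobenius_def dotp_def sum.distrib sum_divide_distrib[symmetric])
  finally show ?thesis .
qed

section \<open>The doubling step\<close>

(* By subspace_dist_eq_overlap, the overlaps 0 and h/2 are the distances sqrt h and sqrt (h/2). *)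
definition two_distance_family :: "nat \<Rightarrow> (nat \<Rightarrow> real) set set \<Rightarrow> bool" where
  "two_distance_family h C \<longleftrightarrow> finite C \<and> (\<forall>S\<in>C. complemented (2 * h) h S) \<and>
     (\<forall>S\<in>C. \<forall>T\<in>C. S \<noteq> T \<longrightarrow> overlap (2 * h) S T = 0 \<or> overlap (2 * h) S T = h / 2)"

lemma two_distance_family_image:
  assumes "finite L" "0 < h"
    and complemented: "\<And>l. l \<in> L \<Longrightarrow> complemented (2 * h) h (g l)"
    and overlap: "\<And>l l'. l \<in> L \<Longrightarrow> l' \<in> L \<Longrightarrow> l \<noteq> l' \<Longrightarrow>
      overlap (2 * h) (g l) (g l') = 0 \<or> overlap (2 * h) (g l) (g l') = h / 2"
  shows "two_distance_family h (g ` L) \<and> card (g ` L) = card L"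
proof -
  have "inj_on g L"
  proof (rule inj_onI, rule ccontr)
    fix l l' assume l: "l \<in> L" "l' \<in> L" "g l = g l'" "l \<noteq> l'"
    have "overlap (2 * h) (g l) (g l') = h"
      using overlap_self[OF complemented_has_onb[OF complemented[OF l(1)]]] l(3) by simp
    then show False using overlap[OF l(1,2,4)] \<open>0 < h\<close> by auto
  qed
  then show ?thesis
    unfolding two_distance_family_def using assms by (auto simp: card_image)
qed

datatype block = Front | Back | Twin "(nat \<Rightarrow> real) set" | Skew "(nat \<Rightarrow> real) set"

datatype label = Block block | Graph "nat \<Rightarrow> nat \<Rightarrow> real"

fun upper_half :: "nat \<Rightarrow> block \<Rightarrow> (nat \<Rightarrow> real) set" where
  "upper_half h Front = {x. in_Rm h x}"
| "upper_half h Back = {\<lambda>_. 0}"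
| "upper_half h (Twin P) = P"
| "upper_half h (Skew P) = P"

fun lower_half :: "nat \<Rightarrow> block \<Rightarrow> (nat \<Rightarrow> real) set" where
  "lower_half h Front = {\<lambda>_. 0}"
| "lower_half h Back = {x. in_Rm h x}"
| "lower_half h (Twin P) = P"
| "lower_half h (Skew P) = perp h P"

fun label_space :: "nat \<Rightarrow> label \<Rightarrow> (nat \<Rightarrow> real) set" where
  "label_space h (Block b) = direct_sum h (upper_half h b) (lower_half h b)"
| "label_space h (Graph Q) = rowspace h (2 * h) (IQ h Q)"

definition blocks :: "(nat \<Rightarrow> real) set set \<Rightarrow> block set" where
  "blocks C = {Front, Back} \<union> Twin ` C \<union> Skew ` C"

definition labels :: "(nat \<Rightarrow> real) set set \<Rightarrow> (nat \<Rightarrow> nat \<Rightarrow> real) set \<Rightarrow> label set" where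
  "labels C QQ = Block ` blocks C \<union> Graph ` QQ"

lemma card_labels:
  assumes "finite C" "finite QQ"
  shows "finite (labels C QQ) \<and> card (labels C QQ) = 2 + 2 * card C + card QQ"
proof -
  have "card (blocks C) = card ({Front, Back} \<union> Twin ` C) + card (Skew ` C)"
    unfolding blocks_def using assms by (intro card_Un_disjoint) auto
  also have "card ({Front, Back} \<union> Twin ` C) = 2 + card (Twin ` C)"
    using assms by (subst card_Un_disjoint) auto
  finally have "card (blocks C) = 2 + 2 * card C"
    by (simp add: card_image inj_on_def)
  moreover have "finite (blocks C)" using assms by (simp add: blocks_def)
  moreover have "card (labels C QQ) = card (Block ` blocks C) + card (Graph ` QQ)"
    unfolding labels_def using assms \<open>finite (blocks C)\<close> by (intro card_Un_disjoint) auto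
  ultimately show ?thesis
    using assms by (simp add: labels_def card_image inj_on_def)
qed

lemma Cs_Suc_Suc:
  "Cs (Suc (Suc k)) = label_space (2 ^ Suc k) ` labels (Cs (Suc k)) (Qs (Suc (Suc k)))"
proof -
  have pairs: "(\<Union>P\<in>C. {A P, B P}) = A ` C \<union> B ` C" for C :: "'a set" and A B :: "'a \<Rightarrow> 'b"
    by auto
  have "direct_sum h {x. in_Rm h x} {\<lambda>_. 0} = {concat h x (\<lambda>_. 0) | x. in_Rm h x}"
    "direct_sum h {\<lambda>_. 0} {x. in_Rm h x} = {concat h (\<lambda>_. 0) x | x. in_Rm h x}" for h
    unfolding direct_sum_def by auto
  then show ?thesis
    unfolding labels_def blocks_def by (simp add: image_Un image_image pairs direct_sum_def Un_assoc)
qed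

context
  fixes p :: nat and C :: "(nat \<Rightarrow> real) set set" and QQ :: "(nat \<Rightarrow> nat \<Rightarrow> real) set"
  assumes p: "0 < p" and C: "two_distance_family p C" and QQ: "orthogonal_family (2 * p) QQ"
begin

lemma member_complemented: "P \<in> C \<Longrightarrow> complemented (2 * p) p P"
  using C unfolding two_distance_family_def by blast

lemma member_has_onb:
  assumes "P \<in> C"
  shows "has_onb (2 * p) P p" "has_onb (2 * p) (perp (2 * p) P) p"
proof -
  show "has_onb (2 * p) P p" using complemented_has_onb[OF member_complemented[OF assms]] .
  have "has_onb (2 * p) (perp (2 * p) P) (2 * p - p)"
    using complemented_has_onb[OF complemented_perp[OF member_complemented[OF assms]]] .
  then show "has_onb (2 * p) (perp (2 * p) P) p" by simp
qed

lemma overlap_Rm_member: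
  assumes "P \<in> C"
  shows "overlap (2 * p) {x. in_Rm (2 * p) x} P = p" "overlap (2 * p) P {x. in_Rm (2 * p) x} = p"
    "overlap (2 * p) {x. in_Rm (2 * p) x} (perp (2 * p) P) = p"
    "overlap (2 * p) (perp (2 * p) P) {x. in_Rm (2 * p) x} = p"
  using overlap_Rm_left member_has_onb[OF assms] overlap_commute by metis+

lemma overlap_perp_member:
  assumes "P \<in> C" "P' \<in> C"
  shows "overlap (2 * p) (perp (2 * p) P) P' = p - overlap (2 * p) P P'"
    and "overlap (2 * p) P (perp (2 * p) P') = p - overlap (2 * p) P P'"
    and "overlap (2 * p) (perp (2 * p) P) (perp (2 * p) P') = overlap (2 * p) P P'"
proof -
  show "overlap (2 * p) (perp (2 * p) P) P' = p - overlap (2 * p) P P'"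
    using overlap_perp_left[OF member_complemented[OF assms(1)] member_has_onb(1)[OF assms(2)]] by simp
  show right: "overlap (2 * p) P (perp (2 * p) P') = p - overlap (2 * p) P P'"
    using overlap_perp_left[OF member_complemented[OF assms(2)] member_has_onb(1)[OF assms(1)]]
      overlap_commute[of "2 * p" P "perp (2 * p) P'"] overlap_commute[of "2 * p" P' P]
    by linarith
  show "overlap (2 * p) (perp (2 * p) P) (perp (2 * p) P') = overlap (2 * p) P P'"
    using overlap_perp_left[OF member_complemented[OF assms(1)] member_has_onb(2)[OF assms(2)]] right
    by linarith
qed

lemma block_halves_complemented:
  assumes "b \<in> blocks C"
  obtains n where "n \<le> 2 * p" "complemented (2 * p) n (upper_half (2 * p) b)"
    "complemented (2 * p) (2 * p - n) (lower_half (2 * p) b)"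
proof (cases b)
  case Front
  then show ?thesis using that[of "2 * p"] complemented_Rm complemented_zero by simp
next
  case Back
  then show ?thesis using that[of 0] complemented_Rm complemented_zero by simp
next
  case (Twin P)
  then show ?thesis using that[of p] member_complemented assms by (auto simp: blocks_def mult_2)
next
  case (Skew P)
  then show ?thesis
    using that[of p] member_complemented complemented_perp[OF member_complemented] assms
    by (auto simp: blocks_def mult_2)
qed

lemma label_space_complemented:
  assumes "l \<in> labels C QQ"
  shows "complemented (2 * (2 * p)) (2 * p) (label_space (2 * p) l)"
proof (cases l)
  case (Block b)
  then have "b \<in> blocks C" using assms by (auto simp: labels_def)
  then obtain n where "n \<le> 2 * p" "complemented (2 * p) n (upper_half (2 * p) b)"
    "complemented (2 * p) (2 * p - n) (lower_half (2 * p) b)"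
    by (rule block_halves_complemented)
  then show ?thesis using complemented_direct_sum Block by fastforce
next
  case (Graph Q)
  then have "orthogonal_matrix (2 * p) Q" using assms QQ by (auto simp: labels_def orthogonal_family_def)
  then show ?thesis using complemented_graph[of "2 * p" Q] Graph by simp
qed

lemma block_overlap:
  assumes "b \<in> blocks C" "b' \<in> blocks C" "b \<noteq> b'"
  shows "overlap (2 * p) (upper_half (2 * p) b) (upper_half (2 * p) b')
    + overlap (2 * p) (lower_half (2 * p) b) (lower_half (2 * p) b') \<in> {0, real p}"
proof (cases "\<exists>P P'. b = Twin P \<and> b' = Twin P' \<or> b = Skew P \<and> b' = Skew P'")
  case True
  then obtain P P' where PP': "b = Twin P \<and> b' = Twin P' \<or> b = Skew P \<and> b' = Skew P'" by blast
  then have "P \<in> C" "P' \<in> C" "P \<noteq> P'" using assms by (auto simp: blocks_def)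
  moreover from this have "overlap (2 * p) P P' = 0 \<or> overlap (2 * p) P P' = p / 2"
    using C unfolding two_distance_family_def by blast
  ultimately show ?thesis using PP' overlap_perp_member by auto
next
  case False
  then show ?thesis
    using assms by (cases b; cases b') (auto simp: blocks_def overlap_Rm_member overlap_perp_member)
qed

lemma overlap_graph_block:
  assumes "Q \<in> QQ" "b \<in> blocks C"
  shows "overlap (2 * (2 * p)) (label_space (2 * p) (Graph Q)) (label_space (2 * p) (Block b)) = p"
proof -
  obtain n where n: "n \<le> 2 * p" and halves: "complemented (2 * p) n (upper_half (2 * p) b)"
    "complemented (2 * p) (2 * p - n) (lower_half (2 * p) b)"
    using block_halves_complemented[OF assms(2)] .
  have "orthogonal_matrix (2 * p) Q" using QQ assms(1) unfolding orthogonal_family_def by blast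
  from overlap_graph_direct_sum[OF this halves[THEN complemented_has_onb]]
  show ?thesis using n by simp
qed

lemma label_space_overlap:
  assumes "l \<in> labels C QQ" "l' \<in> labels C QQ" "l \<noteq> l'"
  shows "overlap (2 * (2 * p)) (label_space (2 * p) l) (label_space (2 * p) l') = 0 \<or>
    overlap (2 * (2 * p)) (label_space (2 * p) l) (label_space (2 * p) l') = real (2 * p) / 2"
proof (cases l; cases l')
  fix b b' assume l: "l = Block b" "l' = Block b'"
  then have b: "b \<in> blocks C" "b' \<in> blocks C" "b \<noteq> b'" using assms by (auto simp: labels_def)
  obtain n n' where "complemented (2 * p) n (upper_half (2 * p) b)"
    "complemented (2 * p) (2 * p - n) (lower_half (2 * p) b)"
    "complemented (2 * p) n' (upper_half (2 * p) b')"
    "complemented (2 * p) (2 * p - n') (lower_half (2 * p) b')"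
    using block_halves_complemented b by metis
  from overlap_direct_sum[OF this[THEN complemented_has_onb]]
  have "overlap (2 * (2 * p)) (label_space (2 * p) l) (label_space (2 * p) l') =
    overlap (2 * p) (upper_half (2 * p) b) (upper_half (2 * p) b')
    + overlap (2 * p) (lower_half (2 * p) b) (lower_half (2 * p) b')"
    unfolding l by simp
  then show ?thesis using block_overlap[OF b] by auto
next
  fix b Q' assume "l = Block b" "l' = Graph Q'"
  then show ?thesis using overlap_graph_block[of Q' b] assms overlap_commute by (auto simp: labels_def)
next
  fix Q b' assume "l = Graph Q" "l' = Block b'"
  then show ?thesis using overlap_graph_block[of Q b'] assms by (auto simp: labels_def)
next
  fix Q Q' assume l: "l = Graph Q" "l' = Graph Q'"
  then have "Q \<in> QQ" "Q' \<in> QQ" "Q \<noteq> Q'" using assms by (auto simp: labels_def)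
  then have Q: "orthogonal_matrix (2 * p) Q" "orthogonal_matrix (2 * p) Q'"
    and "frobenius (2 * p) Q Q' = 0 \<or> frobenius (2 * p) Q Q' = - real (2 * p)"
    using QQ unfolding orthogonal_family_def by blast+
  then show ?thesis unfolding l label_space.simps overlap_graph_graph[OF Q] by auto
qed

lemma two_distance_family_double:
  "two_distance_family (2 * p) (label_space (2 * p) ` labels C QQ) \<and>
    card (label_space (2 * p) ` labels C QQ) = 2 + 2 * card C + card QQ"
proof -
  have "finite C" "finite QQ"
    using C QQ unfolding two_distance_family_def orthogonal_family_def by auto
  then show ?thesis
    using two_distance_family_image[of "labels C QQ" "2 * p" "label_space (2 * p)"] p
      label_space_complemented label_space_overlap card_labels by simp
qed

end

section \<open>The codes \<open>C\<^sub>i\<close>\<close>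

definition vec2 :: "real \<Rightarrow> real \<Rightarrow> nat \<Rightarrow> real" where
  "vec2 x y = (\<lambda>j. if j = 0 then x else if j = 1 then y else 0)"

lemma dotp_vec2: "dotp 2 (vec2 x y) (vec2 x' y') = x * x' + y * y'"
  unfolding dotp_def vec2_def sum_lessThan_2 by simp

lemma rowspace_row2:
  assumes "r \<noteq> 0"
  shows "rowspace 1 2 (row2 x y) = span_of 1 (\<lambda>_. vec2 (r * x) (r * y))"
proof -
  have "rowspace 1 2 (row2 x y) = span_of 1 (row2 x y)"
    by (rule rowspace_eq_span_of) (simp add: row2_def)
  also have "\<dots> = span_of 1 (\<lambda>t j. vec2 (r * x) (r * y) j / r)"
    using assms by (intro span_of_cong) (auto simp: row2_def vec2_def fun_eq_iff)
  also have "\<dots> = span_of 1 (\<lambda>_. vec2 (r * x) (r * y))"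
    using assms by (rule span_of_divide)
  finally show ?thesis .
qed

lemma orthonormal_vec2: "x\<^sup>2 + y\<^sup>2 = 1 \<Longrightarrow> orthonormal 2 1 (\<lambda>_. vec2 x y)"
  unfolding orthonormal_def dotp_vec2 by (simp add: in_Rm_def vec2_def power2_eq_square)

lemma complemented_line:
  assumes "x\<^sup>2 + y\<^sup>2 = 1"
  shows "complemented 2 1 (span_of 1 (\<lambda>_. vec2 x y))"
proof -
  have "(- y)\<^sup>2 + x\<^sup>2 = 1" using assms by simp
  then have "orthogonal_frames 2 1 (2 - 1) (\<lambda>_. vec2 x y) (\<lambda>_. vec2 (- y) x)"
    using orthonormal_vec2[OF assms] orthonormal_vec2[of "- y" x]
    unfolding orthogonal_frames_def dotp_vec2 by simp
  then show ?thesis unfolding complemented_def by auto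
qed

lemma overlap_lines:
  assumes "x\<^sup>2 + y\<^sup>2 = 1" "x'\<^sup>2 + y'\<^sup>2 = 1"
  shows "overlap 2 (span_of 1 (\<lambda>_. vec2 x y)) (span_of 1 (\<lambda>_. vec2 x' y')) = (x * x' + y * y')\<^sup>2"
  using overlap_span_of[OF orthonormal_vec2[OF assms(1)] orthonormal_vec2[OF assms(2)]]
  by (simp add: dotp_vec2)

lemma Cs_1_two_distance_family: "two_distance_family 1 (Cs 1) \<and> card (Cs 1) = 4"
proof -
  define s :: real where "s = 1 / sqrt 2"
  have s: "s \<noteq> 0" "s\<^sup>2 = 1 / 2" unfolding s_def by (simp_all add: power_divide)
  define L where "L = {(1, 0), (0, 1), (s, s), (s, - s)}"
  define line where "line l = span_of 1 (\<lambda>_. vec2 (fst l) (snd l))" for l :: "real \<times> real"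
  have "rowspace 1 2 (row2 1 0) = line (1, 0)" "rowspace 1 2 (row2 0 1) = line (0, 1)"
    "rowspace 1 2 (row2 1 1) = line (s, s)" "rowspace 1 2 (row2 1 (- 1)) = line (s, - s)"
    unfolding line_def
    using rowspace_row2[of 1] rowspace_row2[OF s(1), of 1 1] rowspace_row2[OF s(1), of 1 "- 1"]
    by simp_all
  then have Cs: "Cs 1 = line ` L" unfolding L_def Cs.simps by simp
  have unit: "(fst l)\<^sup>2 + (snd l)\<^sup>2 = 1" if "l \<in> L" for l
    using that s(2) by (auto simp: L_def)
  have "(fst l * fst l' + snd l * snd l')\<^sup>2 \<in> {0, s\<^sup>2}" if "l \<in> L" "l' \<in> L" "l \<noteq> l'" for l l'
    using that by (auto simp: L_def)
  then have overlap: "overlap (2 * 1) (line l) (line l') = 0 \<or> overlap (2 * 1) (line l) (line l') = real 1 / 2"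
    if "l \<in> L" "l' \<in> L" "l \<noteq> l'" for l l'
    using overlap_lines[OF unit[OF that(1)] unit[OF that(2)]] s(2) that unfolding line_def by auto
  have "two_distance_family 1 (line ` L) \<and> card (line ` L) = card L"
    by (rule two_distance_family_image)
      (use complemented_line[OF unit] overlap in \<open>auto simp: L_def line_def\<close>)
  moreover have "card L = 4" using s(1) by (simp add: L_def)
  ultimately show ?thesis unfolding Cs by simp
qed

lemma Cs_two_distance_family:
  assumes "1 \<le> i"
  shows "two_distance_family (2 ^ (i - 1)) (Cs i) \<and> card (Cs i) = 4 ^ i + 2 ^ i - 2"
  using assms
proof (induction i rule: nat_induct_at_least)
  case base
  then show ?case using Cs_1_two_distance_family by simp
next
  case (Suc i)
  then obtain k where i: "i = Suc k" by (cases i) auto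
  define p :: nat where "p = 2 ^ k"
  have IH: "two_distance_family p (Cs (Suc k))" "card (Cs (Suc k)) = 4 * 4 ^ k + 2 * 2 ^ k - 2"
    using Suc.IH unfolding i p_def by simp_all
  have QQ: "orthogonal_family (2 * p) (Qs (Suc (Suc k)))" "card (Qs (Suc (Suc k))) = 2 * (4 * 4 ^ k)"
    using Qs_orthogonal_family[of "Suc (Suc k)"] unfolding p_def by simp_all
  have "two_distance_family (2 * p) (Cs (Suc (Suc k))) \<and>
      card (Cs (Suc (Suc k))) = 2 + 2 * card (Cs (Suc k)) + card (Qs (Suc (Suc k)))"
    using two_distance_family_double[OF _ IH(1) QQ(1)] unfolding Cs_Suc_Suc p_def by simp
  moreover have "(2::nat) \<le> 4 * 4 ^ k + 2 * 2 ^ k"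
    using one_le_power[of "4::nat" k] by linarith
  ultimately show ?case unfolding i p_def using IH(2) QQ(2) by auto
qed

theorem mainTheorem1:
  fixes i :: nat
  assumes "i \<ge> 1"
  defines "m \<equiv> (2::nat) ^ i"
  shows "card (Cs i) = (m - 1) * (m + 2)
       \<and> card (Cs i) = 2^(2*i) + 2^i - 2
       \<and> (\<forall>S\<in>Cs i. has_dim m S (m div 2))
       \<and> (\<forall>S\<in>Cs i. \<forall>T\<in>Cs i. S \<noteq> T \<longrightarrow>
            subspace_dist m (m div 2) S T = sqrt (real m / 4)
          \<or> subspace_dist m (m div 2) S T = sqrt (real m / 2))"
proof -
  define n where "n = (2::nat) ^ (i - 1)"
  obtain k where i: "i = Suc k" using assms(1) by (cases i) auto
  have m: "m = 2 * n" "m div 2 = n" unfolding m_def n_def i by simp_all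
  obtain family: "two_distance_family n (Cs i)" and card: "card (Cs i) = 4 ^ i + 2 ^ i - 2"
    using Cs_two_distance_family[OF assms(1)] unfolding n_def by blast
  have onb: "has_onb m S n" if "S \<in> Cs i" for S
    using family that complemented_has_onb unfolding two_distance_family_def m by blast
  have squares: "(4::nat) ^ i = m * m" "(2::nat) ^ (2 * i) = m * m"
    unfolding m_def by (simp_all add: power_mult_distrib[symmetric] power_mult power2_eq_square)
  show ?thesis
  proof (intro conjI ballI impI)
    show "card (Cs i) = (m - 1) * (m + 2)" "card (Cs i) = 2 ^ (2 * i) + 2 ^ i - 2"
      using card squares m_def m(1) by (simp_all add: algebra_simps)
    show "has_dim m S (m div 2)" if "S \<in> Cs i" for S
      using onb[OF that] m(2) by (simp add: has_onb_imp_has_dim)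
    fix S T assume "S \<in> Cs i" "T \<in> Cs i" "S \<noteq> T"
    then have "overlap m S T = 0 \<or> overlap m S T = n / 2"
      using family unfolding two_distance_family_def m by blast
    then show "subspace_dist m (m div 2) S T = sqrt (real m / 4) \<or>
        subspace_dist m (m div 2) S T = sqrt (real m / 2)"
      using subspace_dist_eq_overlap[OF onb onb] \<open>S \<in> Cs i\<close> \<open>T \<in> Cs i\<close> m by auto
  qed
qed

end
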